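(* Let $\mathcal B=(\mathcal B_{r,s})_{r,s\ge0}$ be a banded infinite matrix defining a bounded operator on $\ell^2$. Assume that $\mathcal B$ has a right limit $\mathcal B^R$ along a subsequence $\{n_j\}_j$. Then $$\lim_{j\to\infty}\exp(-z\operatorname{Tr}\mathcal BP_{n_j})\det\big(1+(e^{z\mathcal B}-1)P_{n_j}\big)=\lim_{M\to\infty}\exp(-z\operatorname{Tr}\mathcal B^R_MP_-)\det\big(1+(e^{z\mathcal B^R_M}-1)P_-\big),$$ uniformly for $z$ in a sufficiently small neighborhood of the origin. In particular both limits exist and are analytic in a neighborhood of the origin.
   Context: $\mathcal B^R=(\mathcal B^R_{r,s})_{r,s\in\mathbb Z}$ is a right limit of $\mathcal B$ along $\{n_j\}$ if $\mathcal B^R_{r,s}=\lim_j\mathcal B_{n_j+r,n_j+s}$ for all $r,s\in\mathbb Z$ and $\mathcal B^R$ is bounded on $\ell^2(\mathbb Z)$. $\mathcal B^R_M$ equals $\mathcal B^R_{r,s}$ for $r,s\in\{-M,\dots,M\}$ and $0$ otherwise. $P_n$ is the projection onto the coordinates $0,\dots,n-1$; $P_-$ is the projection on $\ell^2(\mathbb Z)$ onto coordinates $r<0$. Determinants are Fredholm determinants. *)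

theory Defs
  imports "HOL-Analysis.Analysis"
begin

text \<open>Infinite matrices are functions 'i => 'i => complex, with index type nat
  (for operators on l2 of N) or int (for operators on l2 of Z).\<close>

type_synonym 'i mat = "'i \<Rightarrow> 'i \<Rightarrow> complex"

definition idm :: "'i mat" where
  "idm = (\<lambda>r s. if r = s then 1 else 0)"

text \<open>Matrix product (entries are finite sums for banded matrices / projections).\<close>
definition mmult :: "'i mat \<Rightarrow> 'i mat \<Rightarrow> 'i mat" where
  "mmult A C = (\<lambda>r s. \<Sum>\<^sub>\<infinity>t. A r t * C t s)"

definition msub :: "'i mat \<Rightarrow> 'i mat \<Rightarrow> 'i mat" where
  "msub A C = (\<lambda>r s. A r s - C r s)"

primrec mpow :: "'i mat \<Rightarrow> nat \<Rightarrow> 'i mat" where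
  "mpow A 0 = idm"
| "mpow A (Suc k) = mmult A (mpow A k)"

definition mexp :: "'i mat \<Rightarrow> 'i mat" where
  "mexp A = (\<lambda>r s. \<Sum>k. (1 / of_nat (fact k)) * mpow A k r s)"

definition mscale :: "complex \<Rightarrow> 'i mat \<Rightarrow> 'i mat" where
  "mscale z A = (\<lambda>r s. z * A r s)"

definition bounded_l2 :: "'i mat \<Rightarrow> bool" where
  "bounded_l2 A \<longleftrightarrow> (\<exists>C. \<forall>x :: 'i \<Rightarrow> complex.
     (\<lambda>s. (norm (x s))\<^sup>2) summable_on UNIV \<longrightarrow>
       (\<forall>r. (\<lambda>s. A r s * x s) summable_on UNIV) \<and>
       (\<lambda>r. (norm (\<Sum>\<^sub>\<infinity>s. A r s * x s))\<^sup>2) summable_on UNIV \<and>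
       (\<Sum>\<^sub>\<infinity>r. (norm (\<Sum>\<^sub>\<infinity>s. A r s * x s))\<^sup>2) \<le> C\<^sup>2 * (\<Sum>\<^sub>\<infinity>s. (norm (x s))\<^sup>2))"

definition banded_nat :: "nat mat \<Rightarrow> bool" where
  "banded_nat B \<longleftrightarrow> (\<exists>w::nat. \<forall>r s. \<bar>int r - int s\<bar> > int w \<longrightarrow> B r s = 0)"

text \<open>Extension of a matrix on N x N by zero to Z x Z (only used for shifted entries,
  which are eventually in range).\<close>
definition zext :: "nat mat \<Rightarrow> int mat" where
  "zext B = (\<lambda>r s. if r \<ge> 0 \<and> s \<ge> 0 then B (nat r) (nat s) else 0)"

definition right_limit :: "nat mat \<Rightarrow> (nat \<Rightarrow> nat) \<Rightarrow> int mat \<Rightarrow> bool" where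
  "right_limit B n BR \<longleftrightarrow>
     (\<forall>r s. (\<lambda>j. zext B (int (n j) + r) (int (n j) + s)) \<longlonglongrightarrow> BR r s) \<and> bounded_l2 BR"

definition trunc :: "nat \<Rightarrow> int mat \<Rightarrow> int mat" where
  "trunc M A = (\<lambda>r s. if \<bar>r\<bar> \<le> int M \<and> \<bar>s\<bar> \<le> int M then A r s else 0)"

definition Pn :: "nat \<Rightarrow> nat mat" where
  "Pn n = (\<lambda>r s. if r = s \<and> r < n then 1 else 0)"

definition Pminus :: "int mat" where
  "Pminus = (\<lambda>r s. if r = s \<and> r < 0 then 1 else 0)"

definition mtrace :: "'i mat \<Rightarrow> complex" where
  "mtrace A = (\<Sum>\<^sub>\<infinity>r. A r r)"

definition det_on :: "'i set \<Rightarrow> 'i mat \<Rightarrow> complex" where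
  "det_on S M = (\<Sum>p\<in>{p. p permutes S}. of_int (sign p) * (\<Prod>i\<in>S. M i (p i)))"

text \<open>Fredholm determinant det(1+K) for K with finitely many nonzero columns
  (the only case needed): 1+K is block lower triangular w.r.t. the column support S
  and its complement, so det(1+K) = det((1+K) restricted to S x S).\<close>
definition fredholm_det :: "'i mat \<Rightarrow> complex" where
  "fredholm_det K = det_on {s. \<exists>r. K r s \<noteq> 0} (\<lambda>r s. idm r s + K r s)"

end

theory Submission
  imports "Jordan_Normal_Form.Schur_Decomposition" "HOL-Complex_Analysis.Complex_Analysis" Defs
begin

(*
  Let A be a banded matrix on Z (bandwidth w) with row sums bounded by rho, let P project onto
  the rows r < c, and suppose A vanishes below some row, so that det (1 + (e^(zA) - 1) P) is a
  finite determinant. For small z its logarithm is sum_m (-1)^(m+1)/m tr (((e^(zA) - 1) P)^m);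
  expanding every factor e^(zA) - 1 = sum_a z^(a+1)/(a+1)! A^(a+1) turns it into an absolutely
  convergent sum over lists (a_1, ..., a_m) of traces of A^(a_1+1) P ... A^(a_m+1) P.
  Dropping the inner projections gives tr (A^k P) with k = sum (a_i + 1), and because
  log (1 + (e^z - 1)) = z these terms add up to z tr (A P). The differences of traces that
  remain only involve the rows within distance k w below the cut, so
      exp (-z tr (A P)) det (1 + (e^(zA) - 1) P) = exp (Lambda z),
  where Lambda is a series depending only on the entries of A near the cut, with a majorant
  depending only on w and rho. The finite sections of B, shifted to the cut n_j, and the
  truncations of B^R both converge entrywise to B^R near the cut; hence both sides of the
  theorem converge uniformly to exp Lambda for B^R, which is analytic as a uniform limit of
  polynomials.
*)

hide_const (open) Determinants.det

section \<open>Banded matrices indexed by \<int>\<close>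

definition banded :: "nat \<Rightarrow> int mat \<Rightarrow> bool" where
  "banded w A \<longleftrightarrow> (\<forall>r s. \<bar>r - s\<bar> > int w \<longrightarrow> A r s = 0)"

lemma banded_nonzero_range:
  assumes "banded w A" "A r s \<noteq> 0" shows "r - int w \<le> s" "s \<le> r + int w"
  using assms by (cases "\<bar>r - s\<bar> > int w"; auto simp: banded_def abs_if split: if_splits)+

lemma mmult_banded_left:
  assumes "banded v A"
  shows "mmult A C r s = (\<Sum>t\<in>{r - int v..r + int v}. A r t * C t s)"
proof -
  have "mmult A C r s = (\<Sum>\<^sub>\<infinity>t\<in>{r - int v..r + int v}. A r t * C t s)"
    unfolding mmult_def by (rule infsum_cong_neutral) (use assms in \<open>auto simp: banded_def\<close>)
  then show ?thesis by simp
qed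

lemma mmult_banded_right:
  assumes "banded v C"
  shows "mmult A C r s = (\<Sum>t\<in>{s - int v..s + int v}. A r t * C t s)"
proof -
  have "mmult A C r s = (\<Sum>\<^sub>\<infinity>t\<in>{s - int v..s + int v}. A r t * C t s)"
    unfolding mmult_def by (rule infsum_cong_neutral) (use assms in \<open>auto simp: banded_def abs_minus_commute\<close>)
  then show ?thesis by simp
qed

lemma banded_idm: "banded 0 idm"
  by (auto simp: banded_def idm_def)

lemma mmult_idm_left: "mmult idm (C :: int mat) = C"
proof (intro ext)
  fix r s show "mmult idm C r s = C r s"
    using mmult_banded_left[OF banded_idm, of C r s] by (simp add: idm_def)
qed

lemma mmult_idm_right: "mmult (C :: int mat) idm = C"
proof (intro ext)
  fix r s show "mmult C idm r s = C r s"
    using mmult_banded_right[OF banded_idm, of C r s] by (simp add: idm_def)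
qed

lemma banded_mmult:
  assumes "banded v A" "banded u C"
  shows "banded (v + u) (mmult A C)"
  unfolding banded_def
proof (intro allI impI)
  fix r s assume rs: "int (v + u) < \<bar>r - s\<bar>"
  have "A r t * C t s = 0" for t
  proof (cases "\<bar>r - t\<bar> > int v")
    case True then show ?thesis using assms(1) by (simp add: banded_def)
  next
    case False
    then have "\<bar>t - s\<bar> > int u" using rs by auto
    then show ?thesis using assms(2) by (simp add: banded_def)
  qed
  then show "mmult A C r s = 0" by (simp add: mmult_def infsum_0)
qed

lemma mmult_assoc:
  assumes "banded v A" "banded u C" "banded x D"
  shows "mmult (mmult A C) D = mmult A (mmult C D)"
proof (intro ext)
  fix r s
  have "mmult (mmult A C) D r s = (\<Sum>t\<in>{s - int x..s + int x}. (\<Sum>q\<in>{r - int v..r + int v}. A r q * C q t) * D t s)"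
    by (simp add: mmult_banded_right[OF assms(3)] mmult_banded_left[OF assms(1)])
  also have "\<dots> = (\<Sum>q\<in>{r - int v..r + int v}. A r q * (\<Sum>t\<in>{s - int x..s + int x}. C q t * D t s))"
    by (simp add: sum_distrib_left sum_distrib_right mult.assoc sum.swap[of _ "{s - int x..s + int x}"])
  also have "\<dots> = mmult A (mmult C D) r s"
    by (simp add: mmult_banded_right[OF assms(3)] mmult_banded_left[OF assms(1)])
  finally show "mmult (mmult A C) D r s = mmult A (mmult C D) r s" .
qed

lemma banded_mpow: "banded w A \<Longrightarrow> banded (k * w) (mpow A k)"
proof (induction k)
  case 0 then show ?case using banded_idm by simp
next
  case (Suc k)
  then show ?case using banded_mmult[OF Suc.prems Suc.IH] by (simp add: add.commute)
qed

lemma mpow_add: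
  assumes "banded w A"
  shows "mpow A (a + b) = mmult (mpow A a) (mpow A b)"
proof (induction a)
  case 0 then show ?case by (simp add: mmult_idm_left)
next
  case (Suc a)
  then show ?case
    using mmult_assoc[OF assms banded_mpow[OF assms, of a] banded_mpow[OF assms, of b]] by simp
qed

section \<open>Row-sum bounds\<close>

definition row_sum_le :: "real \<Rightarrow> int mat \<Rightarrow> bool" where
  "row_sum_le \<rho> A \<longleftrightarrow> (\<forall>r F. finite F \<longrightarrow> (\<Sum>s\<in>F. norm (A r s)) \<le> \<rho>)"

lemma row_sum_le_entry: "row_sum_le \<rho> A \<Longrightarrow> norm (A r s) \<le> \<rho>"
  unfolding row_sum_le_def by (erule allE[of _ r], erule allE[of _ "{s}"]) simp

lemma row_sum_le_nonneg: "row_sum_le \<rho> A \<Longrightarrow> 0 \<le> \<rho>"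
  unfolding row_sum_le_def by (erule allE[of _ 0], erule allE[of _ "{}"]) simp

lemma row_sum_le_idm: "row_sum_le 1 idm"
  unfolding row_sum_le_def
proof (intro allI impI)
  fix r and F :: "int set" assume "finite F"
  have "(\<Sum>s\<in>F. norm (idm r s :: complex)) = (\<Sum>s\<in>F \<inter> {r}. 1)"
    by (rule sum.mono_neutral_cong_right) (auto simp: idm_def \<open>finite F\<close>)
  also have "\<dots> \<le> 1" by (cases "r \<in> F") auto
  finally show "(\<Sum>s\<in>F. norm (idm r s :: complex)) \<le> 1" .
qed

lemma row_sum_le_mmult:
  assumes "banded v A" "row_sum_le a A" "row_sum_le b C"
  shows "row_sum_le (a * b) (mmult A C)"
  unfolding row_sum_le_def
proof (intro allI impI)
  fix r and F :: "int set" assume F: "finite F"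
  let ?W = "{r - int v..r + int v}"
  have "(\<Sum>s\<in>F. norm (mmult A C r s)) \<le> (\<Sum>s\<in>F. \<Sum>t\<in>?W. norm (A r t) * norm (C t s))"
    by (intro sum_mono) (auto simp: mmult_banded_left[OF assms(1)] norm_mult intro!: order_trans[OF norm_sum])
  also have "\<dots> = (\<Sum>t\<in>?W. norm (A r t) * (\<Sum>s\<in>F. norm (C t s)))"
    by (simp add: sum.swap[of _ F] sum_distrib_left)
  also have "\<dots> \<le> (\<Sum>t\<in>?W. norm (A r t) * b)"
    using assms(3) F by (intro sum_mono mult_left_mono) (auto simp: row_sum_le_def)
  also have "\<dots> = (\<Sum>t\<in>?W. norm (A r t)) * b" by (simp add: sum_distrib_right)
  also have "\<dots> \<le> a * b"
    using assms(2) row_sum_le_nonneg[OF assms(3)] by (intro mult_right_mono) (auto simp: row_sum_le_def)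
  finally show "(\<Sum>s\<in>F. norm (mmult A C r s)) \<le> a * b" .
qed

lemma row_sum_le_mpow:
  assumes "banded w A" "row_sum_le \<rho> A"
  shows "row_sum_le (\<rho> ^ k) (mpow A k)"
proof (induction k)
  case 0 then show ?case using row_sum_le_idm by simp
next
  case (Suc k)
  then show ?case using row_sum_le_mmult[OF assms Suc.IH] by simp
qed

definition entries_le :: "real \<Rightarrow> int mat \<Rightarrow> bool" where
  "entries_le \<beta> A \<longleftrightarrow> (\<forall>r s. norm (A r s) \<le> \<beta>)"

lemma row_sum_le_banded:
  assumes "banded w A" "entries_le \<beta> A" "(2 * real w + 1) * \<beta> \<le> \<rho>"
  shows "row_sum_le \<rho> A"
  unfolding row_sum_le_def
proof (intro allI impI)
  fix r and F :: "int set" assume F: "finite F"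
  let ?W = "{r - int w..r + int w}"
  have "(\<Sum>s\<in>F. norm (A r s)) = (\<Sum>s\<in>F \<inter> ?W. norm (A r s))"
    by (rule sum.mono_neutral_cong_right) (use banded_nonzero_range[OF assms(1)] F in \<open>force+\<close>)
  also have "\<dots> \<le> (\<Sum>s\<in>?W. norm (A r s))"
    by (rule sum_mono2) auto
  also have "\<dots> \<le> (\<Sum>s\<in>?W. \<beta>)"
    using assms(2) by (intro sum_mono) (auto simp: entries_le_def)
  also have "\<dots> = (2 * real w + 1) * \<beta>" by simp
  finally show "(\<Sum>s\<in>F. norm (A r s)) \<le> \<rho>" using assms(3) by linarith
qed

definition proj_below :: "int \<Rightarrow> int mat" where
  "proj_below c = (\<lambda>r s. if r = s \<and> r < c then 1 else 0)"

lemma banded_proj_below: "banded 0 (proj_below c)"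
  by (auto simp: banded_def proj_below_def)

lemma mmult_proj_below_left: "mmult (proj_below c) X r s = (if r < c then X r s else 0)"
  using mmult_banded_left[OF banded_proj_below, of c X r s] by (simp add: proj_below_def)

lemma row_sum_le_proj_below: "row_sum_le 1 (proj_below c)"
  unfolding row_sum_le_def
proof (intro allI impI)
  fix r and F :: "int set" assume "finite F"
  have "(\<Sum>s\<in>F. norm (proj_below c r s)) \<le> (\<Sum>s\<in>F. norm (idm r s :: complex))"
    by (intro sum_mono) (auto simp: proj_below_def idm_def)
  also have "\<dots> \<le> 1" using row_sum_le_idm \<open>finite F\<close> by (auto simp: row_sum_le_def)
  finally show "(\<Sum>s\<in>F. norm (proj_below c r s)) \<le> 1" .
qed

lemma banded_mscale: "banded w A \<Longrightarrow> banded w (mscale z A)"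
  by (auto simp: banded_def mscale_def)

lemma mpow_mscale:
  assumes "banded w A"
  shows "mpow (mscale z A) k r s = z ^ k * mpow A k r s"
proof (induction k arbitrary: r s)
  case 0 then show ?case by simp
next
  case (Suc k)
  have "mpow (mscale z A) (Suc k) r s = (\<Sum>t\<in>{r - int w..r + int w}. z * A r t * (z ^ k * mpow A k t s))"
    by (simp only: mpow.simps mmult_banded_left[OF banded_mscale[OF assms]] Suc.IH) (simp add: mscale_def)
  also have "\<dots> = z ^ Suc k * mpow A (Suc k) r s"
    by (simp add: mmult_banded_left[OF assms] sum_distrib_left mult_ac)
  finally show ?case .
qed

section \<open>The exponential series\<close>

lemma exp_real_sums: "(\<lambda>n. (y::real) ^ n / fact n) sums exp y"
  using exp_converges[of y] by (simp add: divide_inverse mult.commute scaleR_conv_of_real)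

lemma exp_real_sums_Suc: "(\<lambda>n. (y::real) ^ Suc n / fact (Suc n)) sums (exp y - 1)"
  using exp_real_sums[of y] by (subst sums_Suc_iff) simp

lemma norm_mpow_le:
  assumes "banded w A" "row_sum_le \<rho> A"
  shows "norm (mpow A k r s) \<le> \<rho> ^ k"
  using row_sum_le_entry[OF row_sum_le_mpow[OF assms]] .

lemma mexp_sums:
  assumes "banded w A" "row_sum_le \<rho> A"
  shows "(\<lambda>k. z ^ k / fact k * mpow A k r s) sums mexp (mscale z A) r s"
proof -
  have bound: "norm (z ^ k / fact k * mpow A k r s) \<le> (norm z * \<rho>) ^ k / fact k" for k
  proof -
    have "norm (z ^ k / fact k * mpow A k r s) = norm z ^ k / fact k * norm (mpow A k r s)"
      by (simp add: norm_mult norm_divide norm_power)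
    also have "\<dots> \<le> norm z ^ k / fact k * \<rho> ^ k"
      by (intro mult_left_mono norm_mpow_le[OF assms]) auto
    finally show ?thesis by (simp add: power_mult_distrib)
  qed
  have "summable (\<lambda>k. z ^ k / fact k * mpow A k r s)"
    by (rule summable_comparison_test[OF _ sums_summable[OF exp_real_sums]]) (use bound in auto)
  moreover have "mexp (mscale z A) r s = (\<Sum>k. z ^ k / fact k * mpow A k r s)"
    unfolding mexp_def by (simp add: mpow_mscale[OF assms(1)])
  ultimately show ?thesis by (simp add: summable_sums)
qed

definition exp_coeff :: "complex \<Rightarrow> nat \<Rightarrow> complex" where
  "exp_coeff z a = z ^ Suc a / fact (Suc a)"

lemma mexp_minus_idm_sums:
  assumes "banded w A" "row_sum_le \<rho> A"
  shows "(\<lambda>a. exp_coeff z a * mpow A (Suc a) r s) sums (mexp (mscale z A) r s - idm r s)"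
  using mexp_sums[OF assms, of z r s] unfolding exp_coeff_def
  by (subst sums_Suc_iff) simp

lemma norm_exp_coeff_mpow_le:
  assumes "banded w A" "row_sum_le \<rho> A"
  shows "norm (exp_coeff z a * mpow A (Suc a) r s) \<le> (norm z * \<rho>) ^ Suc a / fact (Suc a)"
proof -
  have "norm (exp_coeff z a * mpow A (Suc a) r s) = norm z ^ Suc a / fact (Suc a) * norm (mpow A (Suc a) r s)"
    by (simp add: exp_coeff_def norm_mult norm_divide norm_power del: fact_Suc mpow.simps)
  also have "\<dots> \<le> norm z ^ Suc a / fact (Suc a) * \<rho> ^ Suc a"
    by (intro mult_left_mono norm_mpow_le[OF assms]) auto
  finally show ?thesis by (simp add: power_mult_distrib mult_ac)
qed

lemma row_sum_mexp_minus_idm_le: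
  assumes "banded w A" "row_sum_le \<rho> A" "finite F"
  shows "(\<Sum>s\<in>F. norm (mexp (mscale z A) r s - idm r s)) \<le> exp (norm z * \<rho>) - 1"
proof -
  let ?f = "\<lambda>s a. exp_coeff z a * mpow A (Suc a) r s"
  let ?g = "\<lambda>a. (norm z * \<rho>) ^ Suc a / fact (Suc a)"
  have sg: "summable ?g" using exp_real_sums_Suc by (rule sums_summable)
  have sn: "summable (\<lambda>a. norm (?f s a))" for s
    by (rule summable_comparison_test[OF _ sg]) (use norm_exp_coeff_mpow_le[OF assms(1,2)] in auto)
  have "(\<Sum>s\<in>F. norm (mexp (mscale z A) r s - idm r s)) = (\<Sum>s\<in>F. norm (\<Sum>a. ?f s a))"
    using mexp_minus_idm_sums[OF assms(1,2)] by (simp add: sums_iff)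
  also have "\<dots> \<le> (\<Sum>s\<in>F. \<Sum>a. norm (?f s a))"
    by (intro sum_mono summable_norm sn)
  also have "\<dots> = (\<Sum>a. \<Sum>s\<in>F. norm (?f s a))"
    by (rule suminf_sum[symmetric]) (use sn in auto)
  also have "\<dots> \<le> (\<Sum>a. ?g a)"
  proof (rule suminf_le)
    fix a
    have "(\<Sum>s\<in>F. norm (?f s a)) = norm z ^ Suc a / fact (Suc a) * (\<Sum>s\<in>F. norm (mpow A (Suc a) r s))"
      by (simp add: exp_coeff_def norm_mult norm_divide norm_power sum_distrib_left del: fact_Suc mpow.simps)
    also have "\<dots> \<le> norm z ^ Suc a / fact (Suc a) * \<rho> ^ Suc a"
      using row_sum_le_mpow[OF assms(1,2), of "Suc a"] assms(3) by (intro mult_left_mono) (auto simp: row_sum_le_def)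
    finally show "(\<Sum>s\<in>F. norm (?f s a)) \<le> ?g a" by (simp add: power_mult_distrib mult_ac)
  next
    show "summable (\<lambda>a. \<Sum>s\<in>F. norm (?f s a))" by (intro summable_sum sn)
  qed (rule sg)
  also have "\<dots> = exp (norm z * \<rho>) - 1" using exp_real_sums_Suc by (simp add: sums_iff)
  finally show ?thesis .
qed

section \<open>Cut chains and the cut defect\<close>

definition vanishes_below :: "int \<Rightarrow> int mat \<Rightarrow> bool" where
  "vanishes_below L A \<longleftrightarrow> (\<forall>r s. (r < L \<or> s < L) \<longrightarrow> A r s = 0)"

lemma mmult_vanishes_below_row: "vanishes_below L A \<Longrightarrow> r < L \<Longrightarrow> mmult A X r s = 0"
  by (simp add: mmult_def vanishes_below_def infsum_0)

lemma mmult_vanishes_below_col: "vanishes_below L X \<Longrightarrow> s < L \<Longrightarrow> mmult A X r s = 0"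
  by (simp add: mmult_def vanishes_below_def infsum_0)

lemma vanishes_below_mmult: "vanishes_below L A \<Longrightarrow> vanishes_below L C \<Longrightarrow> vanishes_below L (mmult A C)"
  using mmult_vanishes_below_row mmult_vanishes_below_col unfolding vanishes_below_def by blast

lemma vanishes_below_mpow_Suc: "vanishes_below L A \<Longrightarrow> vanishes_below L (mpow A (Suc k))"
proof (induction k)
  case 0 then show ?case by (simp add: mmult_idm_right)
next
  case (Suc k)
  then show ?case using vanishes_below_mmult[OF Suc.prems Suc.IH] by simp
qed

fun restr_prod :: "int set \<Rightarrow> (nat \<Rightarrow> int mat) \<Rightarrow> nat list \<Rightarrow> int mat" where
  "restr_prod S G [] = idm"
| "restr_prod S G (a # as) = (\<lambda>r s. \<Sum>t\<in>S. G a r t * restr_prod S G as t s)"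

definition total_power :: "nat list \<Rightarrow> nat" where
  "total_power as = sum_list (map Suc as)"

lemma total_power_Nil[simp]: "total_power [] = 0" and total_power_Cons[simp]: "total_power (a # as) = Suc a + total_power as"
  by (simp_all add: total_power_def)

lemma total_power_pos: "as \<noteq> [] \<Longrightarrow> total_power as \<ge> 1"
  by (cases as) auto

fun cut_chain :: "int mat \<Rightarrow> int \<Rightarrow> nat list \<Rightarrow> int mat" where
  "cut_chain A c [] = idm"
| "cut_chain A c (a # as) = mmult (mpow A (Suc a)) (mmult (proj_below c) (cut_chain A c as))"

(* Far below the cut the projections act trivially (cut_chain_far), so the difference of the
   traces of the chain and of the plain power is carried by this window of rows. *)
definition cut_defect :: "nat \<Rightarrow> int mat \<Rightarrow> int \<Rightarrow> nat list \<Rightarrow> complex" where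
  "cut_defect w A c as = (\<Sum>r\<in>{c - int (total_power as * w)..<c}. cut_chain A c as r r - mpow A (total_power as) r r)"

lemma cut_chain_Cons_infsum:
  "cut_chain A c (a # as) r s = (\<Sum>\<^sub>\<infinity>t. mpow A (Suc a) r t * (if t < c then cut_chain A c as t s else 0))"
  by (simp add: mmult_def[of "mpow A (Suc a)"] mmult_proj_below_left del: mpow.simps)

lemma cut_chain_eq_restr_prod:
  assumes "vanishes_below L A"
  shows "cut_chain A c as r s = restr_prod {L..<c} (\<lambda>a. mpow A (Suc a)) as r s"
proof (induction as arbitrary: r s)
  case Nil then show ?case by simp
next
  case (Cons a as)
  have "cut_chain A c (a # as) r s = (\<Sum>\<^sub>\<infinity>t\<in>{L..<c}. mpow A (Suc a) r t * cut_chain A c as t s)"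
    unfolding cut_chain_Cons_infsum
    by (rule infsum_cong_neutral) (use vanishes_below_mpow_Suc[OF assms, of a] in \<open>auto simp: vanishes_below_def\<close>)
  also have "\<dots> = restr_prod {L..<c} (\<lambda>a. mpow A (Suc a)) (a # as) r s"
    by (simp add: Cons.IH del: mpow.simps)
  finally show ?case .
qed

lemma cut_chain_far:
  assumes "banded w A"
  shows "r + int (total_power as * w) < c \<Longrightarrow> cut_chain A c as r s = mpow A (total_power as) r s"
proof (induction as arbitrary: r s)
  case Nil then show ?case by simp
next
  case (Cons a as)
  have eq: "mpow A (Suc a) r t * (if t < c then cut_chain A c as t s else 0) = mpow A (Suc a) r t * mpow A (total_power as) t s" for t
  proof (cases "mpow A (Suc a) r t = 0")
    case False
    have "t \<le> r + int (Suc a * w)"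
      using banded_nonzero_range(2)[OF banded_mpow[OF assms] False] .
    then have tc: "t + int (total_power as * w) < c" using Cons.prems by (simp add: algebra_simps)
    have "(0::int) \<le> int (total_power as * w)" by (rule of_nat_0_le_iff)
    then have "t < c" using tc by linarith
    then show ?thesis using Cons.IH[OF tc, of s] by auto
  qed simp
  have "cut_chain A c (a # as) r s = mmult (mpow A (Suc a)) (mpow A (total_power as)) r s"
    unfolding cut_chain_Cons_infsum eq by (simp add: mmult_def del: mpow.simps)
  also have "\<dots> = mpow A (total_power (a # as)) r s"
    using mpow_add[OF assms, of "Suc a" "total_power as"] by simp
  finally show ?case .
qed

lemma cut_defect_eq_trace_difference:
  assumes "banded w A" "vanishes_below L A" "as \<noteq> []"
  shows "(\<Sum>r\<in>{L..<c}. restr_prod {L..<c} (\<lambda>a. mpow A (Suc a)) as r r)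
       - (\<Sum>r\<in>{L..<c}. mpow A (total_power as) r r) = cut_defect w A c as"
proof -
  let ?f = "\<lambda>r. cut_chain A c as r r - mpow A (total_power as) r r"
  let ?S = "{L..<c}" and ?T = "{c - int (total_power as * w)..<c}"
  obtain a bs where as: "as = a # bs" using assms(3) by (cases as) auto
  have k1: "total_power as = Suc (total_power as - 1)" using total_power_pos[OF assms(3)] by simp
  have z1: "?f r = 0" if "r < L" for r
  proof -
    have "cut_chain A c as r r = 0"
      unfolding as cut_chain.simps by (rule mmult_vanishes_below_row[OF vanishes_below_mpow_Suc[OF assms(2)] that])
    moreover have "mpow A (total_power as) r r = 0"
      using vanishes_below_mpow_Suc[OF assms(2), of "total_power as - 1"] that k1 by (auto simp: vanishes_below_def)
    ultimately show ?thesis by simp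
  qed
  have z2: "?f r = 0" if "r < c - int (total_power as * w)" for r
    using cut_chain_far[OF assms(1), of r as c r] that by simp
  have "(\<Sum>r\<in>?S. restr_prod ?S (\<lambda>a. mpow A (Suc a)) as r r) - (\<Sum>r\<in>?S. mpow A (total_power as) r r) = (\<Sum>r\<in>?S. ?f r)"
    by (simp add: sum_subtractf cut_chain_eq_restr_prod[OF assms(2)])
  also have "\<dots> = (\<Sum>r\<in>?S \<inter> ?T. ?f r)"
  proof (rule sum.mono_neutral_right)
    show "\<forall>r\<in>?S - ?S \<inter> ?T. ?f r = 0"
    proof
      fix r assume "r \<in> ?S - ?S \<inter> ?T"
      then have "r < c - int (total_power as * w)" by auto
      then show "?f r = 0" by (rule z2)
    qed
  qed auto
  also have "\<dots> = (\<Sum>r\<in>?T. ?f r)"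
  proof (rule sum.mono_neutral_left)
    show "\<forall>r\<in>?T - ?S \<inter> ?T. ?f r = 0"
    proof
      fix r assume "r \<in> ?T - ?S \<inter> ?T"
      then have "r < L" by auto
      then show "?f r = 0" by (rule z1)
    qed
  qed auto
  finally show ?thesis unfolding cut_defect_def .
qed

definition shift :: "int \<Rightarrow> int mat \<Rightarrow> int mat" where
  "shift c A = (\<lambda>r s. A (c + r) (c + s))"

lemma mmult_shift: "mmult (shift c A) (shift c C) = shift c (mmult A C)"
proof (intro ext)
  fix r s
  have "bij_betw (\<lambda>t. c + t) UNIV (UNIV :: int set)"
    by (rule bij_betwI[of _ _ _ "\<lambda>t. t - c"]) auto
  then show "mmult (shift c A) (shift c C) r s = shift c (mmult A C) r s"
    unfolding mmult_def shift_def
    by (rule infsum_reindex_bij_betw[where f = "\<lambda>t. A (c + r) t * C t (c + s)"])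
qed

lemma shift_idm: "shift c idm = idm"
  by (auto simp: shift_def idm_def)

lemma shift_proj_below: "shift c (proj_below c) = proj_below 0"
  by (auto simp: shift_def proj_below_def)

lemma mpow_shift: "mpow (shift c A) k = shift c (mpow A k)"
  by (induction k) (simp_all add: shift_idm mmult_shift)

lemma cut_chain_shift: "cut_chain (shift c A) 0 as = shift c (cut_chain A c as)"
  by (induction as) (simp_all add: shift_idm mmult_shift[symmetric] mpow_shift shift_proj_below del: mpow.simps)

lemma cut_defect_shift: "cut_defect w A c as = cut_defect w (shift c A) 0 as"
proof -
  let ?K = "int (total_power as * w)"
  have "cut_defect w (shift c A) 0 as = (\<Sum>r\<in>{- ?K..<0}. cut_chain A c as (c + r) (c + r) - mpow A (total_power as) (c + r) (c + r))"
    by (simp only: cut_defect_def cut_chain_shift mpow_shift) (simp add: shift_def)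
  also have "\<dots> = cut_defect w A c as"
    unfolding cut_defect_def
    by (rule sum.reindex_bij_witness[of _ "\<lambda>r. r - c" "\<lambda>r. c + r"]) auto
  finally show ?thesis by simp
qed

lemma tendsto_if_const:
  "(f \<longlongrightarrow> l) F \<Longrightarrow> ((\<lambda>x. if P then f x else 0) \<longlongrightarrow> (if P then l else 0)) F"
  by (cases P) auto

lemma banded_limit:
  assumes "\<And>x. banded w (F x)" "\<And>r s. ((\<lambda>x. F x r s) \<longlongrightarrow> A r s) sequentially"
  shows "banded w A"
  unfolding banded_def
proof (intro allI impI)
  fix r s assume "int w < \<bar>r - s\<bar>"
  then have "(\<lambda>x. F x r s) = (\<lambda>x. 0)" using assms(1) by (auto simp: banded_def)
  then show "A r s = 0" using assms(2)[of r s] by (simp add: LIMSEQ_const_iff)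
qed

lemma row_sum_le_limit:
  assumes rs: "\<And>x. row_sum_le \<rho> (As x)" and lim: "\<And>r s. ((\<lambda>x. As x r s) \<longlongrightarrow> A r s) sequentially"
  shows "row_sum_le \<rho> A"
  unfolding row_sum_le_def
proof (intro allI impI)
  fix r and F :: "int set" assume F: "finite F"
  have "((\<lambda>x. \<Sum>s\<in>F. norm (As x r s)) \<longlongrightarrow> (\<Sum>s\<in>F. norm (A r s))) sequentially"
    by (intro tendsto_sum tendsto_norm lim)
  moreover have "\<forall>x. (\<Sum>s\<in>F. norm (As x r s)) \<le> \<rho>" using rs F by (auto simp: row_sum_le_def)
  ultimately show "(\<Sum>s\<in>F. norm (A r s)) \<le> \<rho>"
    by (intro tendsto_upperbound[of _ _ sequentially]) auto
qed

lemma mpow_tendsto: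
  assumes "\<And>x. banded w (F x)" "\<And>r s. ((\<lambda>x. F x r s) \<longlongrightarrow> A r s) sequentially"
  shows "((\<lambda>x. mpow (F x) k r s) \<longlongrightarrow> mpow A k r s) sequentially"
proof (induction k arbitrary: r s)
  case 0 then show ?case by simp
next
  case (Suc k)
  have bA: "banded w A" by (rule banded_limit[OF assms])
  show ?case
    unfolding mpow.simps mmult_banded_left[OF assms(1)] mmult_banded_left[OF bA]
    by (intro tendsto_sum tendsto_mult assms(2) Suc.IH)
qed

lemma cut_chain_tendsto:
  assumes "\<And>x. banded w (F x)" "\<And>r s. ((\<lambda>x. F x r s) \<longlongrightarrow> A r s) sequentially"
  shows "((\<lambda>x. cut_chain (F x) c as r s) \<longlongrightarrow> cut_chain A c as r s) sequentially"
proof (induction as arbitrary: r s)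
  case Nil then show ?case by simp
next
  case (Cons a as)
  have bA: "banded w A" by (rule banded_limit[OF assms])
  show ?case
    unfolding cut_chain.simps mmult_banded_left[OF banded_mpow[OF assms(1)]] mmult_banded_left[OF banded_mpow[OF bA]]
      mmult_proj_below_left
    by (intro tendsto_sum tendsto_mult mpow_tendsto[OF assms] tendsto_if_const Cons.IH)
qed

lemma cut_defect_tendsto:
  assumes "\<And>x. banded w (F x)" "\<And>r s. ((\<lambda>x. F x r s) \<longlongrightarrow> A r s) sequentially"
  shows "((\<lambda>x. cut_defect w (F x) c as) \<longlongrightarrow> cut_defect w A c as) sequentially"
  unfolding cut_defect_def
  by (intro tendsto_sum tendsto_diff cut_chain_tendsto[OF assms] mpow_tendsto[OF assms])

lemma row_sum_le_cut_chain:
  assumes "banded w A" "row_sum_le \<rho> A"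
  shows "row_sum_le (\<rho> ^ total_power as) (cut_chain A c as)"
proof (induction as)
  case Nil then show ?case using row_sum_le_idm by simp
next
  case (Cons a as)
  have "row_sum_le (\<rho> ^ Suc a * (1 * \<rho> ^ total_power as)) (cut_chain A c (a # as))"
    unfolding cut_chain.simps
    by (rule row_sum_le_mmult[OF banded_mpow[OF assms(1)] row_sum_le_mpow[OF assms] row_sum_le_mmult[OF banded_proj_below row_sum_le_proj_below Cons.IH]])
  then show ?case by (simp add: power_add mult.assoc)
qed

lemma norm_cut_defect_le:
  assumes "banded w A" "row_sum_le \<rho> A"
  shows "norm (cut_defect w A c as) \<le> 2 * real w * (2 * \<rho>) ^ total_power as"
proof -
  let ?k = "total_power as"
  have \<rho>: "0 \<le> \<rho>" using row_sum_le_nonneg[OF assms(2)] .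
  have "norm (cut_defect w A c as) \<le> (\<Sum>r\<in>{c - int (?k * w)..<c}. norm (cut_chain A c as r r - mpow A ?k r r))"
    unfolding cut_defect_def by (rule norm_sum)
  also have "\<dots> \<le> (\<Sum>r\<in>{c - int (?k * w)..<c}. 2 * \<rho> ^ ?k)"
  proof (intro sum_mono)
    fix r
    have "norm (cut_chain A c as r r - mpow A ?k r r) \<le> norm (cut_chain A c as r r) + norm (mpow A ?k r r)"
      by (rule norm_triangle_ineq4)
    also have "\<dots> \<le> \<rho> ^ ?k + \<rho> ^ ?k"
      by (intro add_mono row_sum_le_entry[OF row_sum_le_cut_chain[OF assms]] row_sum_le_entry[OF row_sum_le_mpow[OF assms]])
    finally show "norm (cut_chain A c as r r - mpow A ?k r r) \<le> 2 * \<rho> ^ ?k" by simp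
  qed
  also have "\<dots> = 2 * real w * (real ?k * \<rho> ^ ?k)" by simp
  also have "\<dots> \<le> 2 * real w * (2 ^ ?k * \<rho> ^ ?k)"
  proof -
    have "real ?k \<le> 2 ^ ?k"
      using less_exp[of ?k] by (simp add: less_imp_le of_nat_less_numeral_power_cancel_iff)
    then show ?thesis by (intro mult_left_mono mult_right_mono) (use \<rho> in auto)
  qed
  finally show ?thesis by (simp add: power_mult_distrib)
qed

section \<open>Finite determinants as exponentials of the logarithmic series\<close>

lemma upper_triangular_mult:
  fixes B C :: "complex Matrix.mat"
  assumes B: "B \<in> carrier_mat n n" and C: "C \<in> carrier_mat n n"
    and uB: "upper_triangular B" and uC: "upper_triangular C"
  shows "upper_triangular (B * C)" "\<And>j. j < n \<Longrightarrow> (B * C) $$ (j,j) = B $$ (j,j) * C $$ (j,j)"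
proof -
  have ent: "(B * C) $$ (i,j) = (\<Sum>l\<in>{0..<n}. B $$ (i,l) * C $$ (l,j))" if "i < n" "j < n" for i j
    using B C that by (simp add: scalar_prod_def)
  show "upper_triangular (B * C)"
  proof (rule upper_triangularI)
    fix i j assume ij: "j < i" "i < dim_row (B * C)"
    then have i: "i < n" using B by simp
    have "B $$ (i,l) * C $$ (l,j) = 0" if "l < n" for l
    proof (cases "l < i")
      case True then show ?thesis using uB B i by (auto simp: upper_triangular_def)
    next
      case False then have "j < l" using ij by simp
      then show ?thesis using uC C that by (auto simp: upper_triangular_def)
    qed
    then have "(\<Sum>l\<in>{0..<n}. B $$ (i,l) * C $$ (l,j)) = 0" by (intro sum.neutral) auto
    then show "(B * C) $$ (i,j) = 0" using ent[of i j] i ij by simp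
  qed
  fix j assume j: "j < n"
  have "B $$ (j,l) * C $$ (l,j) = (if l = j then B $$ (j,j) * C $$ (j,j) else 0)" if "l < n" for l
  proof (cases "l < j")
    case True then show ?thesis using uB B j by (auto simp: upper_triangular_def)
  next
    case False
    show ?thesis
    proof (cases "l = j")
      case False then have "j < l" using \<open>\<not> l < j\<close> by simp
      then show ?thesis using uC C that by (auto simp: upper_triangular_def)
    qed simp
  qed
  then have "(\<Sum>l\<in>{0..<n}. B $$ (j,l) * C $$ (l,j)) = (\<Sum>l\<in>{0..<n}. (if l = j then B $$ (j,j) * C $$ (j,j) else 0))"
    by (intro sum.cong) auto
  also have "\<dots> = B $$ (j,j) * C $$ (j,j)" using j by (simp add: sum.delta)
  finally show "(B * C) $$ (j,j) = B $$ (j,j) * C $$ (j,j)"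
    using ent[OF j j] by simp
qed

lemma upper_triangular_pow:
  fixes B :: "complex Matrix.mat"
  assumes B: "B \<in> carrier_mat n n" and uB: "upper_triangular B"
  shows "upper_triangular (B ^\<^sub>m k) \<and> (\<forall>j<n. (B ^\<^sub>m k) $$ (j,j) = B $$ (j,j) ^ k)"
proof (induction k)
  case 0 then show ?case using B by auto
next
  case (Suc k)
  have Bk: "B ^\<^sub>m k \<in> carrier_mat n n" using B by simp
  show ?case using upper_triangular_mult[OF Bk B _ uB] Suc.IH by simp
qed

lemma trace_similar_mat:
  fixes P B Q :: "complex Matrix.mat"
  assumes P: "P \<in> carrier_mat n n" and B: "B \<in> carrier_mat n n" and Q: "Q \<in> carrier_mat n n"
    and QP: "Q * P = 1\<^sub>m n"
  shows "(\<Sum>i<n. (P * B * Q) $$ (i,i)) = (\<Sum>i<n. B $$ (i,i))"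
proof -
  have qp: "(\<Sum>i\<in>{0..<n}. Q $$ (l,i) * P $$ (i,j)) = (if l = j then 1 else 0)" if "l < n" "j < n" for l j
  proof -
    have "(Q * P) $$ (l,j) = (\<Sum>i\<in>{0..<n}. Q $$ (l,i) * P $$ (i,j))"
      using P Q that by (simp add: scalar_prod_def)
    then show ?thesis using QP that by simp
  qed
  have ent: "(P * B * Q) $$ (i,i) = (\<Sum>j\<in>{0..<n}. \<Sum>l\<in>{0..<n}. P $$ (i,j) * B $$ (j,l) * Q $$ (l,i))"
    if "i < n" for i
    using P B Q that by (simp add: scalar_prod_def sum_distrib_left mult.assoc)
  have "(\<Sum>i<n. (P * B * Q) $$ (i,i)) = (\<Sum>i\<in>{0..<n}. \<Sum>j\<in>{0..<n}. \<Sum>l\<in>{0..<n}. P $$ (i,j) * B $$ (j,l) * Q $$ (l,i))"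
    by (simp add: ent lessThan_atLeast0)
  also have "\<dots> = (\<Sum>j\<in>{0..<n}. \<Sum>i\<in>{0..<n}. \<Sum>l\<in>{0..<n}. P $$ (i,j) * B $$ (j,l) * Q $$ (l,i))"
    by (rule sum.swap)
  also have "\<dots> = (\<Sum>j\<in>{0..<n}. \<Sum>l\<in>{0..<n}. \<Sum>i\<in>{0..<n}. P $$ (i,j) * B $$ (j,l) * Q $$ (l,i))"
    by (rule sum.cong[OF refl]) (rule sum.swap)
  also have "\<dots> = (\<Sum>j\<in>{0..<n}. \<Sum>l\<in>{0..<n}. B $$ (j,l) * (\<Sum>i\<in>{0..<n}. Q $$ (l,i) * P $$ (i,j)))"
    by (unfold sum_distrib_left, (rule sum.cong[OF refl])+, simp add: mult_ac)
  also have "\<dots> = (\<Sum>j\<in>{0..<n}. \<Sum>l\<in>{0..<n}. (if l = j then B $$ (j,j) else 0))"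
    by (intro sum.cong refl) (auto simp: qp)
  also have "\<dots> = (\<Sum>i<n. B $$ (i,i))"
    by (simp add: sum.delta lessThan_atLeast0)
  finally show ?thesis .
qed

lemma eigenvalue_norm_le_row_sum:
  fixes A :: "complex Matrix.mat"
  assumes A: "A \<in> carrier_mat n n" and ev: "eigenvector A v e"
    and q: "\<And>i. i < n \<Longrightarrow> (\<Sum>j<n. cmod (A $$ (i,j))) \<le> q"
  shows "cmod e \<le> q"
proof -
  from ev A have v: "v \<in> carrier_vec n" and v0: "v \<noteq> 0\<^sub>v n" and Av: "A *\<^sub>v v = e \<cdot>\<^sub>v v"
    by (auto simp: eigenvector_def)
  obtain i0 where i0: "i0 < n" "v $ i0 \<noteq> 0"
    using v v0 by (metis carrier_vecD eq_vecI index_zero_vec(1) index_zero_vec(2))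
  define M where "M = Max ((\<lambda>i. cmod (v $ i)) ` {0..<n})"
  obtain im where im: "im < n" "cmod (v $ im) = M"
  proof -
    have "M \<in> (\<lambda>i. cmod (v $ i)) ` {0..<n}" unfolding M_def
      using i0 by (intro Max_in) auto
    then show ?thesis using that by auto
  qed
  have Mge: "cmod (v $ j) \<le> M" if "j < n" for j
    unfolding M_def using that by (intro Max_ge) auto
  have Mpos: "M > 0" using Mge[OF i0(1)] i0(2) by (smt (verit) zero_less_norm_iff)
  have "e * v $ im = (A *\<^sub>v v) $ im" using Av im v by simp
  also have "\<dots> = (\<Sum>j\<in>{0..<n}. A $$ (im,j) * v $ j)"
    using A v im by (simp add: scalar_prod_def)
  finally have eq: "e * v $ im = (\<Sum>j\<in>{0..<n}. A $$ (im,j) * v $ j)" .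
  have "cmod e * M = cmod (e * v $ im)" by (simp add: norm_mult im)
  also have "\<dots> \<le> (\<Sum>j\<in>{0..<n}. cmod (A $$ (im,j)) * cmod (v $ j))"
    unfolding eq by (rule order_trans[OF norm_sum]) (simp add: norm_mult)
  also have "\<dots> \<le> (\<Sum>j\<in>{0..<n}. cmod (A $$ (im,j)) * M)"
    by (intro sum_mono mult_left_mono Mge) auto
  also have "\<dots> = (\<Sum>j<n. cmod (A $$ (im,j))) * M"
    by (simp add: sum_distrib_right lessThan_atLeast0)
  also have "\<dots> \<le> q * M"
    using q[OF im(1)] Mpos by (intro mult_right_mono) auto
  finally show ?thesis using Mpos by simp
qed

lemma det_one_plus_similar_upper_triangular:
  fixes A B :: "complex Matrix.mat"
  assumes sim: "similar_mat_wit A B P Q" and A: "A \<in> carrier_mat n n" and uB: "upper_triangular B"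
  shows "det (1\<^sub>m n + A) = (\<Prod>j<n. 1 + B $$ (j,j))"
proof -
  from sim A have P: "P \<in> carrier_mat n n" and B: "B \<in> carrier_mat n n" and Q: "Q \<in> carrier_mat n n"
    and PQ: "P * Q = 1\<^sub>m n" and AE: "A = P * B * Q"
    by (auto simp: similar_mat_wit_def Let_def)
  have oneB: "1\<^sub>m n + B \<in> carrier_mat n n" using B by simp
  have "P * (1\<^sub>m n + B) * Q = (P + P * B) * Q"
    using P B by (simp add: mult_add_distrib_mat[OF P one_carrier_mat B])
  also have "\<dots> = 1\<^sub>m n + A"
    using P B Q PQ AE by (simp add: add_mult_distrib_mat)
  finally have "1\<^sub>m n + A = P * (1\<^sub>m n + B) * Q" ..
  then have "det (1\<^sub>m n + A) = det P * det (1\<^sub>m n + B) * det Q"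
    using P Q oneB by (simp add: det_mult[of _ n])
  also have "\<dots> = det (P * Q) * det (1\<^sub>m n + B)"
    using P Q by (simp add: det_mult[of _ n])
  also have "\<dots> = (\<Prod>j = 0..<n. (1\<^sub>m n + B) $$ (j,j))"
    using PQ det_upper_triangular[OF _ oneB] uB B oneB
    by (simp add: prod_list_diag_prod upper_triangular_def)
  also have "\<dots> = (\<Prod>j<n. 1 + B $$ (j,j))"
    using B by (intro prod.cong) (auto simp: lessThan_atLeast0)
  finally show ?thesis .
qed

lemma schur_eigenvalues:
  fixes A :: "complex Matrix.mat"
  assumes A: "A \<in> carrier_mat n n"
  obtains lam where "\<And>j. j < n \<Longrightarrow> eigenvalue A (lam j)"
    and "det (1\<^sub>m n + A) = (\<Prod>j<n. 1 + lam j)"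
    and "\<And>k. (\<Sum>i<n. (A ^\<^sub>m k) $$ (i,i)) = (\<Sum>j<n. lam j ^ k)"
proof -
  obtain es where cp: "char_poly A = (\<Prod>a\<leftarrow>es. [:- a, 1:])"
    using char_poly_factorized[OF A] by auto
  obtain B P Q where sd: "schur_decomposition A es = (B,P,Q)"
    by (cases "schur_decomposition A es") auto
  from schur_decomposition[OF A cp sd] have sim: "similar_mat_wit A B P Q"
    and uB: "upper_triangular B" and dB: "diag_mat B = es" by auto
  from sim A have P: "P \<in> carrier_mat n n" and B: "B \<in> carrier_mat n n" and Q: "Q \<in> carrier_mat n n"
    and QP: "Q * P = 1\<^sub>m n"
    by (auto simp: similar_mat_wit_def Let_def)
  define lam where "lam j = B $$ (j,j)" for j
  have ev: "eigenvalue A (lam j)" if j: "j < n" for j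
  proof -
    have "lam j \<in> set es" using dB B j by (auto simp: diag_mat_def lam_def)
    then have "poly (char_poly A) (lam j) = 0"
      unfolding cp poly_prod_list by (auto simp: prod_list_zero_iff o_def)
    then show ?thesis using eigenvalue_root_char_poly[OF A] by simp
  qed
  have tr: "(\<Sum>i<n. (A ^\<^sub>m k) $$ (i,i)) = (\<Sum>j<n. lam j ^ k)" for k
  proof -
    have "A ^\<^sub>m k = P * B ^\<^sub>m k * Q" by (rule similar_mat_wit_pow_id[OF sim])
    then have "(\<Sum>i<n. (A ^\<^sub>m k) $$ (i,i)) = (\<Sum>i<n. (B ^\<^sub>m k) $$ (i,i))"
      using trace_similar_mat[OF P _ Q QP, of "B ^\<^sub>m k"] B by simp
    also have "\<dots> = (\<Sum>j<n. lam j ^ k)"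
      using upper_triangular_pow[OF B uB, of k] by (simp add: lam_def)
    finally show ?thesis .
  qed
  show ?thesis
  proof (rule that[of lam])
  qed (use ev tr det_one_plus_similar_upper_triangular[OF sim A uB] in \<open>simp_all add: lam_def\<close>)
qed

lemma det_one_plus_eq_exp_log_series:
  fixes A :: "complex Matrix.mat"
  assumes A: "A \<in> carrier_mat n n"
    and q: "\<And>i. i < n \<Longrightarrow> (\<Sum>j<n. cmod (A $$ (i,j))) \<le> q" and q1: "q < 1"
  shows "det (1\<^sub>m n + A) = exp (\<Sum>k. - ((-1) ^ k) / of_nat k * (\<Sum>i<n. (A ^\<^sub>m k) $$ (i,i)))"
proof -
  obtain lam where ev: "\<And>j. j < n \<Longrightarrow> eigenvalue A (lam j)"
    and det_eq: "det (1\<^sub>m n + A) = (\<Prod>j<n. 1 + lam j)"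
    and tr: "\<And>k. (\<Sum>i<n. (A ^\<^sub>m k) $$ (i,i)) = (\<Sum>j<n. lam j ^ k)"
    using schur_eigenvalues[OF A] by blast
  have lam1: "cmod (lam j) < 1" if j: "j < n" for j
  proof -
    obtain v where "eigenvector A v (lam j)" using ev[OF j] by (auto simp: eigenvalue_def)
    then show ?thesis using eigenvalue_norm_le_row_sum[OF A _ q] q1 by fastforce
  qed
  have "(\<lambda>k. \<Sum>j<n. - ((- lam j) ^ k) / of_nat k) sums (\<Sum>j<n. ln (1 + lam j))"
    by (intro sums_sum Ln_series' lam1) auto
  moreover have "(\<Sum>j<n. - ((- lam j) ^ k) / of_nat k) = - ((-1) ^ k) / of_nat k * (\<Sum>i<n. (A ^\<^sub>m k) $$ (i,i))" for k
    by (simp add: tr sum_distrib_left power_minus[of "lam _"])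
  ultimately have "(\<Sum>k. - ((-1) ^ k) / of_nat k * (\<Sum>i<n. (A ^\<^sub>m k) $$ (i,i))) = (\<Sum>j<n. ln (1 + lam j))"
    by (simp add: sums_iff)
  moreover have "exp (\<Sum>j<n. ln (1 + lam j)) = (\<Prod>j<n. 1 + lam j)"
  proof -
    have "1 + lam j \<noteq> 0" if "j < n" for j
      using lam1[OF that] by (metis add.commute add_eq_0_iff norm_minus_cancel norm_one order_less_irrefl)
    then show ?thesis by (simp add: exp_sum)
  qed
  ultimately show ?thesis using det_eq by simp
qed

primrec restr_pow :: "'i set \<Rightarrow> ('i \<Rightarrow> 'i \<Rightarrow> complex) \<Rightarrow> nat \<Rightarrow> 'i \<Rightarrow> 'i \<Rightarrow> complex" where
  "restr_pow S X 0 = idm"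
| "restr_pow S X (Suc m) = (\<lambda>r s. \<Sum>t\<in>S. restr_pow S X m r t * X t s)"

definition restr_trace :: "'i set \<Rightarrow> ('i \<Rightarrow> 'i \<Rightarrow> complex) \<Rightarrow> nat \<Rightarrow> complex" where
  "restr_trace S X m = (\<Sum>r\<in>S. restr_pow S X m r r)"

(* The term m = 0 vanishes since division by 0 gives 0. *)
definition log_series :: "'i set \<Rightarrow> ('i \<Rightarrow> 'i \<Rightarrow> complex) \<Rightarrow> complex" where
  "log_series S X = (\<Sum>m. - ((-1) ^ m) / of_nat m * restr_trace S X m)"

lemma det_on_eq_det_mat:
  fixes M :: "'i \<Rightarrow> 'i \<Rightarrow> complex"
  assumes f: "bij_betw f {0..<n} S"
  shows "det_on S M = det (Matrix.mat n n (\<lambda>(i,j). M (f i) (f j)))"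
proof -
  define g where "g = inv_into {0..<n} f"
  have g: "bij_betw g S {0..<n}" unfolding g_def by (rule bij_betw_inv_into[OF f])
  have fg: "f (g x) = x" if "x \<in> S" for x
    using f that unfolding g_def by (simp add: bij_betw_inv_into_right)
  have gf: "g (f i) = i" if "i \<in> {0..<n}" for i
    using f that unfolding g_def by (simp add: bij_betw_inv_into_left)
  have injf: "inj_on f {0..<n}" using f by (rule bij_betw_imp_inj_on)
  have injg: "inj_on g S" using g by (rule bij_betw_imp_inj_on)
  have finS: "finite S" using f bij_betw_finite by blast
  have "det (Matrix.mat n n (\<lambda>(i,j). M (f i) (f j))) =
      (\<Sum>p\<in>{p. p permutes {0..<n}}. of_int (sign p) * (\<Prod>i = 0..<n. M (f i) (f (p i))))"
    by (subst det_def'[of _ n]) (auto intro!: sum.cong prod.cong simp: permutes_in_image)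
  also have "\<dots> = det_on S M"
    unfolding det_on_def
  proof (rule sum.reindex_bij_witness[of _ "map_permutation S g" "map_permutation {0..<n} f"], goal_cases)
    case (1 q)
    then show ?case by (intro map_permutation_compose_inv[OF f]) (auto simp: gf)
  next
    case (2 q)
    then show ?case using map_permutation_permutes[OF f] by auto
  next
    case (3 p)
    then show ?case by (intro map_permutation_compose_inv[OF g]) (auto simp: fg)
  next
    case (4 p)
    then show ?case using map_permutation_permutes[OF g] by auto
  next
    case (5 p)
    then have p: "p permutes {0..<n}" by simp
    have "sign (map_permutation {0..<n} f p) = sign p"
      by (rule sign_map_permutation[OF injf p]) simp
    moreover have "(\<Prod>x\<in>S. M x (map_permutation {0..<n} f p x)) = (\<Prod>i = 0..<n. M (f i) (f (p i)))"
    proof -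
      have "(\<Prod>x\<in>S. M x (map_permutation {0..<n} f p x)) = (\<Prod>i = 0..<n. M (f i) (map_permutation {0..<n} f p (f i)))"
        by (rule prod.reindex_bij_betw[OF f, symmetric])
      also have "\<dots> = (\<Prod>i = 0..<n. M (f i) (f (p i)))"
        by (intro prod.cong refl) (simp add: map_permutation_apply[OF injf])
      finally show ?thesis .
    qed
    ultimately show ?case by simp
  qed
  finally show ?thesis by simp
qed

lemma restr_pow_eq_mat_pow:
  fixes X :: "'i \<Rightarrow> 'i \<Rightarrow> complex"
  assumes f: "bij_betw f {0..<n} S" and i: "i < n" and j: "j < n"
  shows "restr_pow S X m (f i) (f j) = (Matrix.mat n n (\<lambda>(i,j). X (f i) (f j)) ^\<^sub>m m) $$ (i,j)"
  using i j
proof (induction m arbitrary: j)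
  case 0
  have "f i = f j \<longleftrightarrow> i = j" using bij_betw_imp_inj_on[OF f] 0 by (auto simp: inj_on_def)
  then show ?case using 0 by (simp add: idm_def)
next
  case (Suc m)
  let ?A = "Matrix.mat n n (\<lambda>(i,j). X (f i) (f j))"
  have "(?A ^\<^sub>m Suc m) $$ (i,j) = (\<Sum>l\<in>{0..<n}. (?A ^\<^sub>m m) $$ (i,l) * X (f l) (f j))"
    using Suc.prems by (simp add: scalar_prod_def)
  also have "\<dots> = (\<Sum>l\<in>{0..<n}. restr_pow S X m (f i) (f l) * X (f l) (f j))"
    using Suc by (intro sum.cong refl) simp
  also have "\<dots> = (\<Sum>t\<in>S. restr_pow S X m (f i) t * X t (f j))"
    by (rule sum.reindex_bij_betw[OF f, where g = "\<lambda>t. restr_pow S X m (f i) t * X t (f j)"])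
  finally show ?case by simp
qed

lemma det_on_eq_exp_log_series:
  fixes X :: "'i \<Rightarrow> 'i \<Rightarrow> complex"
  assumes finS: "finite S" and q: "\<And>r. r \<in> S \<Longrightarrow> (\<Sum>t\<in>S. cmod (X r t)) \<le> q" and q1: "q < 1"
  shows "det_on S (\<lambda>r s. idm r s + X r s) = exp (log_series S X)"
proof -
  obtain f where f: "bij_betw f {0..<card S} S" using ex_bij_betw_nat_finite[OF finS] by blast
  define n where "n = card S"
  have f': "bij_betw f {0..<n} S" using f by (simp add: n_def)
  have inj: "f i = f j \<longleftrightarrow> i = j" if "i < n" "j < n" for i j
    using bij_betw_imp_inj_on[OF f'] that by (auto simp: inj_on_def)
  let ?A = "Matrix.mat n n (\<lambda>(i,j). X (f i) (f j))"
  have A: "?A \<in> carrier_mat n n" by simp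
  have "det_on S (\<lambda>r s. idm r s + X r s) = det (Matrix.mat n n (\<lambda>(i,j). idm (f i) (f j) + X (f i) (f j)))"
    by (rule det_on_eq_det_mat[OF f'])
  also have "Matrix.mat n n (\<lambda>(i,j). idm (f i) (f j) + X (f i) (f j)) = 1\<^sub>m n + ?A"
    by (rule eq_matI) (auto simp: idm_def inj)
  also have "det (1\<^sub>m n + ?A) = exp (\<Sum>k. - ((-1) ^ k) / of_nat k * (\<Sum>i<n. (?A ^\<^sub>m k) $$ (i,i)))"
  proof (rule det_one_plus_eq_exp_log_series[OF A _ q1])
    fix i assume i: "i < n"
    have "(\<Sum>j<n. cmod (?A $$ (i,j))) = (\<Sum>j\<in>{0..<n}. cmod (X (f i) (f j)))"
      using i by (simp add: lessThan_atLeast0)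
    also have "\<dots> = (\<Sum>t\<in>S. cmod (X (f i) t))"
      by (rule sum.reindex_bij_betw[OF f', where g = "\<lambda>t. cmod (X (f i) t)"])
    also have "\<dots> \<le> q" using q bij_betwE[OF f'] i by auto
    finally show "(\<Sum>j<n. cmod (?A $$ (i,j))) \<le> q" .
  qed
  also have "(\<lambda>k. - ((-1) ^ k) / of_nat k * (\<Sum>i<n. (?A ^\<^sub>m k) $$ (i,i))) = (\<lambda>k. - ((-1) ^ k) / of_nat k * restr_trace S X k)"
  proof (intro ext)
    fix k
    have "(\<Sum>i<n. (?A ^\<^sub>m k) $$ (i,i)) = (\<Sum>i\<in>{0..<n}. restr_pow S X k (f i) (f i))"
      by (simp add: lessThan_atLeast0 restr_pow_eq_mat_pow[OF f'])
    also have "\<dots> = restr_trace S X k" unfolding restr_trace_def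
      by (rule sum.reindex_bij_betw[OF f', where g = "\<lambda>t. restr_pow S X k t t"])
    finally show "- ((-1) ^ k) / of_nat k * (\<Sum>i<n. (?A ^\<^sub>m k) $$ (i,i)) = - ((-1) ^ k) / of_nat k * restr_trace S X k"
      by simp
  qed
  finally show ?thesis unfolding log_series_def .
qed

lemma det_on_reindex:
  fixes M :: "'i \<Rightarrow> 'i \<Rightarrow> complex" and M' :: "'j \<Rightarrow> 'j \<Rightarrow> complex"
  assumes finS: "finite S" and \<phi>: "bij_betw \<phi> S S'"
    and M: "\<And>r s. r \<in> S \<Longrightarrow> s \<in> S \<Longrightarrow> M' (\<phi> r) (\<phi> s) = M r s"
  shows "det_on S' M' = det_on S M"
proof -
  obtain f where f: "bij_betw f {0..<card S} S" using ex_bij_betw_nat_finite[OF finS] by blast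
  have f2: "bij_betw (\<phi> \<circ> f) {0..<card S} S'" using bij_betw_trans[OF f \<phi>] .
  have "det_on S' M' = det (Matrix.mat (card S) (card S) (\<lambda>(i,j). M' ((\<phi> \<circ> f) i) ((\<phi> \<circ> f) j)))"
    by (rule det_on_eq_det_mat[OF f2])
  also have "Matrix.mat (card S) (card S) (\<lambda>(i,j). M' ((\<phi> \<circ> f) i) ((\<phi> \<circ> f) j)) =
      Matrix.mat (card S) (card S) (\<lambda>(i,j). M (f i) (f j))"
    using bij_betwE[OF f] by (intro eq_matI) (auto simp: M)
  also have "det \<dots> = det_on S M" by (rule det_on_eq_det_mat[OF f, symmetric])
  finally show ?thesis .
qed

section \<open>Sums over lists\<close>

lemma has_sum_finite_sum:
  fixes f :: "'i \<Rightarrow> 'a \<Rightarrow> complex"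
  assumes "finite I" "\<And>i. i \<in> I \<Longrightarrow> (f i has_sum s i) A"
  shows "((\<lambda>x. \<Sum>i\<in>I. f i x) has_sum (\<Sum>i\<in>I. s i)) A"
  using assms
proof (induction I rule: finite_induct)
  case empty then show ?case by (simp add: has_sum_0)
next
  case (insert i I)
  then show ?case by (simp add: has_sum_add)
qed

lemma has_sum_product:
  fixes f :: "'a \<Rightarrow> 'c::{banach,real_normed_field}" and g :: "'b \<Rightarrow> 'c"
  assumes fx: "(f has_sum x) A" and gy: "(g has_sum y) B"
    and fa: "(\<lambda>x. norm (f x)) summable_on A" and ga: "(\<lambda>x. norm (g x)) summable_on B"
  shows "((\<lambda>(a,b). f a * g b) has_sum x * y) (A \<times> B)"
    and "(\<lambda>(a,b). norm (f a * g b)) summable_on (A \<times> B)"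
proof -
  have abs: "(\<lambda>p. norm (f (fst p) * g (snd p))) summable_on Sigma A (\<lambda>_. B)"
  proof (subst Infinite_Sum.abs_summable_on_Sigma_iff, intro conjI ballI)
    fix a assume "a \<in> A"
    show "(\<lambda>b. norm (f (fst (a, b)) * g (snd (a, b)))) summable_on B"
      using summable_on_cmult_right[OF ga, of "norm (f a)"] by (simp add: norm_mult)
  next
    have eq: "\<bar>\<Sum>\<^sub>\<infinity>b\<in>B. norm (f a * g b)\<bar> = \<bar>norm (f a) * (\<Sum>\<^sub>\<infinity>b\<in>B. norm (g b))\<bar>" for a
      by (simp add: norm_mult infsum_cmult_right')
    have "(\<lambda>a. norm (norm (f a) * (\<Sum>\<^sub>\<infinity>b\<in>B. norm (g b)))) summable_on A"
      using summable_on_cmult_left[OF fa, of "\<Sum>\<^sub>\<infinity>b\<in>B. norm (g b)"]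
      by (simp add: abs_mult infsum_nonneg)
    then show "(\<lambda>a. norm (\<Sum>\<^sub>\<infinity>b\<in>B. norm (f (fst (a, b)) * g (snd (a, b))))) summable_on A"
      using eq by simp
  qed
  then show "(\<lambda>(a,b). norm (f a * g b)) summable_on (A \<times> B)"
    by (simp add: split_def)
  have "((\<lambda>p. f (fst p) * g (snd p)) has_sum x * y) (Sigma A (\<lambda>_. B))"
  proof (rule has_sum_SigmaI[where g = "\<lambda>a. f a * y"])
    show "((\<lambda>b. f (fst (a, b)) * g (snd (a, b))) has_sum f a * y) B" if "a \<in> A" for a
      using has_sum_cmult_right[OF gy, of "f a"] by simp
    show "((\<lambda>a. f a * y) has_sum x * y) A" by (rule has_sum_cmult_left[OF fx])
    show "(\<lambda>p. f (fst p) * g (snd p)) summable_on Sigma A (\<lambda>_. B)"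
      by (rule abs_summable_summable[OF abs])
  qed
  then show "((\<lambda>(a,b). f a * g b) has_sum x * y) (A \<times> B)"
    by (simp add: split_def)
qed

definition lists_len :: "nat \<Rightarrow> nat list set" where
  "lists_len m = {as. length as = m}"

lemma lists_len_0: "lists_len 0 = {[]}" by (auto simp: lists_len_def)

lemma bij_Cons_lists_len: "bij_betw (\<lambda>(a, as). a # as) (UNIV \<times> lists_len m) (lists_len (Suc m))"
  by (rule bij_betwI[of _ _ _ "\<lambda>xs. (hd xs, tl xs)"]) (auto simp: lists_len_def length_Suc_conv)

lemma bij_length_Sigma: "bij_betw (\<lambda>as. (length as, as)) UNIV (Sigma UNIV lists_len)"
  by (rule bij_betwI[of _ _ _ snd]) (auto simp: lists_len_def)

definition weight :: "(nat \<Rightarrow> 'c::comm_monoid_mult) \<Rightarrow> nat list \<Rightarrow> 'c" where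
  "weight h as = prod_list (map h as)"

lemma weight_Nil[simp]: "weight h [] = 1" and weight_Cons[simp]: "weight h (a # as) = h a * weight h as"
  by (simp_all add: weight_def)

lemma weight_lists_len_has_sum:
  fixes h :: "nat \<Rightarrow> 'c::{banach,real_normed_field}"
  assumes hs: "(h has_sum H) UNIV" and ha: "(\<lambda>x. norm (h x)) summable_on UNIV"
  shows "(weight h has_sum H ^ m) (lists_len m) \<and> (\<lambda>x. norm (weight h x)) summable_on lists_len m"
proof (induction m)
  case 0 then show ?case using has_sum_finite[of "{[]}" "weight h"] by (simp add: lists_len_0)
next
  case (Suc m)
  have p1: "((\<lambda>(a,as). h a * weight h as) has_sum H * H ^ m) (UNIV \<times> lists_len m)"
    and p2: "(\<lambda>(a,as). norm (h a * weight h as)) summable_on (UNIV \<times> lists_len m)"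
    using has_sum_product[OF hs conjunct1[OF Suc.IH] ha conjunct2[OF Suc.IH]] by auto
  have e: "(\<lambda>(a,as). h a * weight h as) = weight h \<circ> (\<lambda>(a, as). a # as)" by (auto simp: fun_eq_iff)
  have "(weight h has_sum H ^ Suc m) (lists_len (Suc m))"
    using p1 unfolding e has_sum_reindex_bij_betw[OF bij_Cons_lists_len, of "weight h", symmetric]
    by (simp add: o_def case_prod_beta)
  moreover have "(\<lambda>x. norm (weight h x)) summable_on lists_len (Suc m)"
  proof -
    have "(\<lambda>x. norm (weight h ((\<lambda>(a, as). a # as) x))) summable_on (UNIV \<times> lists_len m)"
      by (rule summable_on_cong[THEN iffD1, OF _ p2]) (auto simp: case_prod_beta)
    then show ?thesis using summable_on_reindex_bij_betw[OF bij_Cons_lists_len] by blast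
  qed
  ultimately show ?case by simp
qed

section \<open>Expanding the logarithmic series over lists\<close>

lemma restr_pow_Suc_left:
  fixes X :: "'i \<Rightarrow> 'i \<Rightarrow> complex"
  assumes fin: "finite S"
  shows "r \<in> S \<Longrightarrow> s \<in> S \<Longrightarrow> restr_pow S X (Suc m) r s = (\<Sum>t\<in>S. X r t * restr_pow S X m t s)"
proof (induction m arbitrary: r s)
  case 0
  have "restr_pow S X (Suc 0) r s = (\<Sum>t\<in>S. (if t = r then X t s else 0))"
    unfolding restr_pow.simps by (intro sum.cong refl) (auto simp: idm_def)
  also have "\<dots> = X r s" using 0 fin by (simp add: sum.delta')
  also have "\<dots> = (\<Sum>t\<in>S. (if t = s then X r t else 0))" using 0 fin by (simp add: sum.delta')
  also have "\<dots> = (\<Sum>t\<in>S. X r t * restr_pow S X 0 t s)"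
    by (intro sum.cong refl) (auto simp: idm_def)
  finally show ?case .
next
  case (Suc m)
  have "restr_pow S X (Suc (Suc m)) r s = (\<Sum>t\<in>S. (\<Sum>u\<in>S. X r u * restr_pow S X m u t) * X t s)"
    using Suc.IH[OF Suc.prems(1)] by (simp del: restr_pow.simps(2) add: restr_pow.simps(2)[of S X "Suc m"])
  also have "\<dots> = (\<Sum>t\<in>S. \<Sum>u\<in>S. X r u * restr_pow S X m u t * X t s)"
    by (simp add: sum_distrib_right)
  also have "\<dots> = (\<Sum>u\<in>S. \<Sum>t\<in>S. X r u * restr_pow S X m u t * X t s)"
    by (rule sum.swap)
  also have "\<dots> = (\<Sum>u\<in>S. X r u * (\<Sum>t\<in>S. restr_pow S X m u t * X t s))"
    by (simp add: sum_distrib_left mult.assoc)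
  also have "\<dots> = (\<Sum>u\<in>S. X r u * restr_pow S X (Suc m) u s)" by simp
  finally show ?case .
qed

lemma row_sum_restr_prod_le:
  assumes fin: "finite S" and \<rho>: "0 \<le> \<rho>"
    and hG: "\<And>a r. r \<in> S \<Longrightarrow> (\<Sum>t\<in>S. norm (G a r t)) \<le> \<rho> ^ Suc a"
  shows "r \<in> S \<Longrightarrow> (\<Sum>s\<in>S. norm (restr_prod S G as r s)) \<le> \<rho> ^ total_power as"
proof (induction as arbitrary: r)
  case Nil
  have "(\<Sum>s\<in>S. norm (idm r s :: complex)) = (\<Sum>s\<in>S. (if s = r then 1 else 0))"
    by (intro sum.cong refl) (auto simp: idm_def)
  also have "\<dots> = 1" using Nil fin by (simp add: sum.delta')
  finally show ?case by simp
next
  case (Cons a as)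
  have "(\<Sum>s\<in>S. norm (restr_prod S G (a # as) r s)) \<le> (\<Sum>s\<in>S. \<Sum>t\<in>S. norm (G a r t) * norm (restr_prod S G as t s))"
    by (intro sum_mono) (auto intro!: order_trans[OF norm_sum] simp: norm_mult)
  also have "\<dots> = (\<Sum>t\<in>S. \<Sum>s\<in>S. norm (G a r t) * norm (restr_prod S G as t s))"
    by (rule sum.swap)
  also have "\<dots> = (\<Sum>t\<in>S. norm (G a r t) * (\<Sum>s\<in>S. norm (restr_prod S G as t s)))"
    by (simp add: sum_distrib_left)
  also have "\<dots> \<le> (\<Sum>t\<in>S. norm (G a r t) * \<rho> ^ total_power as)"
    by (intro sum_mono mult_left_mono Cons.IH) auto
  also have "\<dots> = (\<Sum>t\<in>S. norm (G a r t)) * \<rho> ^ total_power as" by (simp add: sum_distrib_right)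
  also have "\<dots> \<le> \<rho> ^ Suc a * \<rho> ^ total_power as"
    by (intro mult_right_mono hG Cons.prems) (use \<rho> in auto)
  finally show ?case by (simp add: power_add)
qed

lemma norm_restr_prod_le:
  assumes fin: "finite S" and \<rho>: "0 \<le> \<rho>"
    and hG: "\<And>a r. r \<in> S \<Longrightarrow> (\<Sum>t\<in>S. norm (G a r t)) \<le> \<rho> ^ Suc a"
    and rs: "r \<in> S" "s \<in> S"
  shows "norm (restr_prod S G as r s) \<le> \<rho> ^ total_power as"
proof -
  have "norm (restr_prod S G as r s) \<le> (\<Sum>s\<in>S. norm (restr_prod S G as r s))"
    by (rule member_le_sum) (use rs fin in auto)
  also have "\<dots> \<le> \<rho> ^ total_power as" by (rule row_sum_restr_prod_le[OF fin \<rho> hG rs(1)])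
  finally show ?thesis .
qed

lemma weight_norm_mult_pow:
  fixes c :: "nat \<Rightarrow> complex"
  shows "weight (\<lambda>a. norm (c a) * \<rho> ^ Suc a) as = norm (weight c as) * (\<rho>::real) ^ total_power as"
  by (induction as) (simp_all add: norm_mult power_add mult_ac)

lemma weight_nonneg: "(\<And>a. 0 \<le> h a) \<Longrightarrow> 0 \<le> weight (h :: nat \<Rightarrow> real) as"
  by (induction as) auto

lemma abs_summable_coeff_series:
  fixes c :: "nat \<Rightarrow> complex"
  assumes "finite S" "t \<in> S" "\<And>a. (\<Sum>t\<in>S. norm (G a r t)) \<le> \<rho> ^ Suc a"
    and "(\<lambda>a. norm (c a) * \<rho> ^ Suc a) summable_on UNIV"
  shows "(\<lambda>a. norm (c a * G a r t)) summable_on UNIV"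
proof (rule Infinite_Sum.abs_summable_on_comparison_test'[OF assms(4)])
  fix a
  have "norm (G a r t) \<le> \<rho> ^ Suc a"
    by (rule order_trans[OF member_le_sum assms(3)]) (use assms(1,2) in auto)
  then show "norm (c a * G a r t) \<le> norm (c a) * \<rho> ^ Suc a"
    unfolding norm_mult by (intro mult_left_mono) auto
qed

lemma restr_pow_list_expansion:
  fixes c :: "nat \<Rightarrow> complex" and \<rho> :: real
  assumes fin: "finite S" and \<rho>: "0 \<le> \<rho>"
    and hG: "\<And>a r. r \<in> S \<Longrightarrow> (\<Sum>t\<in>S. norm (G a r t)) \<le> \<rho> ^ Suc a"
    and hc: "(\<lambda>a. norm (c a) * \<rho> ^ Suc a) summable_on UNIV"
    and hE: "\<And>r t. (\<lambda>a. c a * G a r t) sums E r t"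
  shows "r \<in> S \<Longrightarrow> s \<in> S \<Longrightarrow> ((\<lambda>as. weight c as * restr_prod S G as r s) has_sum restr_pow S E m r s) (lists_len m)"
proof (induction m arbitrary: r s)
  case 0 then show ?case
    using has_sum_finite[of "{[]}" "\<lambda>as. weight c as * restr_prod S G as r s"] by (simp add: lists_len_0)
next
  case (Suc m)
  define h where "h a = norm (c a) * \<rho> ^ Suc a" for a
  have hs: "(h has_sum infsum h UNIV) UNIV" unfolding h_def[abs_def] by (rule has_sum_infsum[OF hc])
  have ha: "(\<lambda>x. norm (h x)) summable_on UNIV"
    using hc \<rho> unfolding h_def[abs_def] by (simp add: abs_mult)
  have Wsum: "(\<lambda>as. weight h as) summable_on lists_len m"
    using conjunct1[OF weight_lists_len_has_sum[OF hs ha, of m]] by (rule has_sum_imp_summable)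
  have IHabs: "(\<lambda>as. norm (weight c as * restr_prod S G as t s)) summable_on lists_len m" if t: "t \<in> S" for t
  proof (rule Infinite_Sum.abs_summable_on_comparison_test'[OF Wsum])
    fix as
    have "norm (weight c as * restr_prod S G as t s) \<le> norm (weight c as) * \<rho> ^ total_power as"
      unfolding norm_mult by (intro mult_left_mono norm_restr_prod_le[OF fin \<rho> hG t Suc.prems(2)]) auto
    also have "\<dots> = weight h as" by (simp only: h_def[abs_def] weight_norm_mult_pow)
    finally show "norm (weight c as * restr_prod S G as t s) \<le> weight h as" .
  qed
  have cabs: "(\<lambda>a. norm (c a * G a r t)) summable_on UNIV" if t: "t \<in> S" for t
    by (rule abs_summable_coeff_series[OF fin t _ hc]) (rule hG[OF Suc.prems(1)])
  have cterm: "((\<lambda>a. c a * G a r t) has_sum E r t) UNIV" if t: "t \<in> S" for t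
    by (rule norm_summable_imp_has_sum[OF summable_on_imp_summable[OF cabs[OF t]] hE])
  have prod: "((\<lambda>(a,as). c a * G a r t * (weight c as * restr_prod S G as t s)) has_sum E r t * restr_pow S E m t s) (UNIV \<times> lists_len m)"
    if t: "t \<in> S" for t
    by (rule has_sum_product(1)[OF cterm[OF t] Suc.IH[OF t Suc.prems(2)] cabs[OF t] IHabs[OF t]])
  have "((\<lambda>x. \<Sum>t\<in>S. (\<lambda>(a,as). c a * G a r t * (weight c as * restr_prod S G as t s)) x) has_sum
          (\<Sum>t\<in>S. E r t * restr_pow S E m t s)) (UNIV \<times> lists_len m)"
    by (rule has_sum_finite_sum[OF fin prod])
  moreover have "(\<lambda>x. \<Sum>t\<in>S. (\<lambda>(a,as). c a * G a r t * (weight c as * restr_prod S G as t s)) x) =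
        (\<lambda>x. (\<lambda>as. weight c as * restr_prod S G as r s) ((\<lambda>(a, as). a # as) x))"
    by (auto simp: fun_eq_iff sum_distrib_left mult_ac)
  moreover have "(\<Sum>t\<in>S. E r t * restr_pow S E m t s) = restr_pow S E (Suc m) r s"
    by (rule restr_pow_Suc_left[OF fin Suc.prems, symmetric])
  ultimately show ?case
    using has_sum_reindex_bij_betw[OF bij_Cons_lists_len, of "\<lambda>as. weight c as * restr_prod S G as r s"] by simp
qed

definition chain_trace :: "int set \<Rightarrow> (nat \<Rightarrow> int mat) \<Rightarrow> nat list \<Rightarrow> complex" where
  "chain_trace S G as = (\<Sum>r\<in>S. restr_prod S G as r r)"

definition log_coeff :: "nat list \<Rightarrow> complex" where
  "log_coeff as = - ((-1) ^ length as) / of_nat (length as)"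

lemma norm_chain_trace_le:
  assumes "finite S" "0 \<le> \<rho>" "\<And>a r. r \<in> S \<Longrightarrow> (\<Sum>t\<in>S. norm (G a r t)) \<le> \<rho> ^ Suc a"
  shows "norm (chain_trace S G as) \<le> real (card S) * \<rho> ^ total_power as"
proof -
  have "norm (chain_trace S G as) \<le> (\<Sum>r\<in>S. norm (restr_prod S G as r r))"
    unfolding chain_trace_def by (rule norm_sum)
  also have "\<dots> \<le> (\<Sum>r\<in>S. \<rho> ^ total_power as)"
    by (intro sum_mono norm_restr_prod_le[OF assms]) auto
  finally show ?thesis by simp
qed

lemma norm_log_coeff: "norm (log_coeff as) \<le> 1"
  by (cases "length as") (auto simp: log_coeff_def norm_divide norm_power simp del: of_nat_Suc)

lemma restr_trace_list_expansion:
  fixes c :: "nat \<Rightarrow> complex" and \<rho> :: real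
  assumes fin: "finite S" and \<rho>: "0 \<le> \<rho>"
    and hG: "\<And>a r. r \<in> S \<Longrightarrow> (\<Sum>t\<in>S. norm (G a r t)) \<le> \<rho> ^ Suc a"
    and hc: "(\<lambda>a. norm (c a) * \<rho> ^ Suc a) summable_on UNIV"
    and hE: "\<And>r t. (\<lambda>a. c a * G a r t) sums E r t"
  shows "((\<lambda>as. weight c as * chain_trace S G as) has_sum restr_trace S E m) (lists_len m)"
proof -
  have "((\<lambda>as. \<Sum>r\<in>S. weight c as * restr_prod S G as r r) has_sum (\<Sum>r\<in>S. restr_pow S E m r r)) (lists_len m)"
    by (rule has_sum_finite_sum[OF fin]) (rule restr_pow_list_expansion[OF fin \<rho> hG hc hE])
  then show ?thesis by (simp add: chain_trace_def restr_trace_def sum_distrib_left)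
qed

lemma weight_summable:
  fixes h :: "nat \<Rightarrow> real"
  assumes hnn: "\<And>a. 0 \<le> h a" and hs: "(h has_sum H) UNIV" and H1: "H < 1"
  shows "weight h summable_on UNIV"
proof -
  have ha: "(\<lambda>x. norm (h x)) summable_on UNIV" using hs hnn by (simp add: has_sum_imp_summable)
  have H0: "0 \<le> H" using hs hnn by (meson has_sum_nonneg)
  have fib: "(weight h has_sum H ^ m) (lists_len m) \<and> (\<lambda>x. norm (weight h x)) summable_on lists_len m" for m
    by (rule weight_lists_len_has_sum[OF hs ha])
  have wnn: "0 \<le> weight h as" for as by (rule weight_nonneg[OF hnn])
  have c1: "\<forall>m\<in>UNIV. (\<lambda>as. norm (weight h (snd (m, as)))) summable_on lists_len m" using fib by simp
  have c2: "(\<lambda>m. norm (\<Sum>\<^sub>\<infinity>as\<in>lists_len m. norm (weight h (snd (m, as))))) summable_on UNIV"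
  proof -
    have "(\<Sum>\<^sub>\<infinity>as\<in>lists_len m. norm (weight h (snd (m, as)))) = H ^ m" for m
      using fib wnn by (auto simp: infsumI)
    moreover have "(\<lambda>m. norm (H ^ m)) summable_on UNIV"
    proof -
      have "(\<lambda>m. H ^ m) sums (1 / (1 - H))" using geometric_sums[of H] H0 H1 by simp
      then have "((\<lambda>m. H ^ m) has_sum (1 / (1 - H))) UNIV"
        by (rule sums_nonneg_imp_has_sum) (use H0 in auto)
      then show ?thesis using H0 by (simp add: has_sum_imp_summable)
    qed
    ultimately show ?thesis by simp
  qed
  have "(\<lambda>p. norm (weight h (snd p))) summable_on Sigma UNIV lists_len"
    using Infinite_Sum.abs_summable_on_Sigma_iff[of "\<lambda>p. weight h (snd p)" UNIV lists_len] c1 c2 by simp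
  then have "(\<lambda>p. weight h (snd p)) summable_on Sigma UNIV lists_len"
    using wnn by simp
  then have "(\<lambda>x. weight h (snd ((\<lambda>as. (length as, as)) x))) summable_on UNIV"
    using summable_on_reindex_bij_betw[OF bij_length_Sigma, of "\<lambda>p. weight h (snd p)"] by blast
  then show ?thesis by simp
qed

lemma log_series_list_expansion:
  fixes c :: "nat \<Rightarrow> complex" and \<rho> :: real
  assumes fin: "finite S" and \<rho>: "0 \<le> \<rho>"
    and hG: "\<And>a r. r \<in> S \<Longrightarrow> (\<Sum>t\<in>S. norm (G a r t)) \<le> \<rho> ^ Suc a"
    and hc: "(\<lambda>a. norm (c a) * \<rho> ^ Suc a) summable_on UNIV"
    and hE: "\<And>r t. (\<lambda>a. c a * G a r t) sums E r t"
    and hH: "(\<Sum>\<^sub>\<infinity>a. norm (c a) * \<rho> ^ Suc a) < 1"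
  shows "((\<lambda>as. log_coeff as * weight c as * chain_trace S G as) has_sum log_series S E) UNIV"
proof -
  define h where "h a = norm (c a) * \<rho> ^ Suc a" for a
  have hnn: "0 \<le> h a" for a using \<rho> by (simp add: h_def)
  have Wsum: "weight h summable_on UNIV"
    by (rule weight_summable[OF hnn _ hH[folded h_def[abs_def]]]) (unfold h_def[abs_def], rule has_sum_infsum[OF hc])
  define F where "F as = log_coeff as * weight c as * chain_trace S G as" for as
  have dom: "norm (F as) \<le> real (card S) * weight h as" for as
  proof -
    have "norm (F as) \<le> 1 * norm (weight c as) * (real (card S) * \<rho> ^ total_power as)"
      unfolding F_def norm_mult
      by (intro mult_mono norm_log_coeff norm_chain_trace_le[OF fin \<rho> hG]) auto
    also have "\<dots> = real (card S) * weight h as"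
      by (simp only: h_def[abs_def] weight_norm_mult_pow) simp
    finally show ?thesis .
  qed
  have Fs: "F summable_on UNIV"
    by (rule abs_summable_summable, rule Infinite_Sum.abs_summable_on_comparison_test'[OF summable_on_cmult_right[OF Wsum] dom])
  define T where "T = infsum F UNIV"
  have FT: "(F has_sum T) UNIV" using Fs by (simp add: T_def)
  have sig: "((\<lambda>p. F (snd p)) has_sum T) (Sigma UNIV lists_len)"
    using FT has_sum_reindex_bij_betw[OF bij_length_Sigma, of "\<lambda>p. F (snd p)" T] by simp
  have fib: "((\<lambda>as. F (snd (m, as))) has_sum (- ((-1) ^ m) / of_nat m * restr_trace S E m)) (lists_len m)" for m
  proof -
    have "((\<lambda>as. (- ((-1) ^ m) / of_nat m) * (weight c as * chain_trace S G as)) has_sum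
        (- ((-1) ^ m) / of_nat m * restr_trace S E m)) (lists_len m)"
      by (rule has_sum_cmult_right[OF restr_trace_list_expansion[OF fin \<rho> hG hc hE]])
    then show ?thesis
      by (rule has_sum_cong[THEN iffD1, rotated]) (auto simp: F_def log_coeff_def lists_len_def)
  qed
  have "((\<lambda>m. - ((-1) ^ m) / of_nat m * restr_trace S E m) has_sum T) UNIV"
    by (rule has_sum_SigmaD[OF sig fib])
  then have "(\<lambda>m. - ((-1) ^ m) / of_nat m * restr_trace S E m) sums T" by (rule has_sum_imp_sums)
  then have "log_series S E = T" by (simp add: log_series_def sums_iff)
  then show ?thesis using FT by (simp add: F_def[abs_def])
qed

section \<open>Coefficients of \<open>log (1 + (exp z - 1)) = z\<close>\<close>

definition lists_power :: "nat \<Rightarrow> nat list set" where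
  "lists_power k = {as. total_power as = k}"

lemma length_le_total_power: "length as \<le> total_power as"
  by (induction as) auto

lemma mem_le_total_power: "a \<in> set as \<Longrightarrow> Suc a \<le> total_power as"
  by (induction as) auto

lemma finite_lists_power: "finite (lists_power k)"
proof (rule finite_subset[OF _ finite_lists_length_le[of "{..<k}" k]])
  show "lists_power k \<subseteq> {xs. set xs \<subseteq> {..<k} \<and> length xs \<le> k}"
    using length_le_total_power mem_le_total_power by (fastforce simp: lists_power_def)
qed simp

lemma bij_total_power_Sigma: "bij_betw (\<lambda>as. (total_power as, as)) UNIV (Sigma UNIV lists_power)"
  by (rule bij_betwI[of _ _ _ snd]) (auto simp: lists_power_def)

lemma sums_regroup_total_power:
  fixes F :: "nat list \<Rightarrow> complex"
  assumes "(F has_sum T) UNIV"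
  shows "(\<lambda>k. \<Sum>as\<in>lists_power k. F as) sums T"
proof -
  have sig: "((\<lambda>p. F (snd p)) has_sum T) (Sigma UNIV lists_power)"
    using assms has_sum_reindex_bij_betw[OF bij_total_power_Sigma, of "\<lambda>p. F (snd p)" T] by simp
  have fib: "((\<lambda>as. F (snd (k, as))) has_sum (\<Sum>as\<in>lists_power k. F as)) (lists_power k)" for k
    using has_sum_finite[of "lists_power k" F] finite_lists_power[of k] by simp
  have "((\<lambda>k. \<Sum>as\<in>lists_power k. F as) has_sum T) UNIV"
    by (rule has_sum_SigmaD[OF sig fib])
  then show ?thesis by (rule has_sum_imp_sums)
qed

lemma exp_coeff_sums: "(\<lambda>a. exp_coeff z a) sums (exp z - 1)"
proof -
  have "(\<lambda>n. z ^ n /\<^sub>R fact n) sums exp z" by (rule exp_converges)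
  then have "(\<lambda>n. z ^ n / fact n) sums exp z" by (simp add: scaleR_conv_of_real divide_inverse mult.commute)
  then show ?thesis unfolding exp_coeff_def by (subst sums_Suc_iff) simp
qed

lemma norm_exp_coeff: "norm (exp_coeff z a) = norm z ^ Suc a / fact (Suc a)"
  by (simp add: exp_coeff_def norm_divide norm_power norm_mult del: fact_Suc power_Suc)

lemma norm_exp_coeff_has_sum: "((\<lambda>a. norm (exp_coeff z a) * \<rho> ^ Suc a) has_sum (exp (norm z * \<rho>) - 1)) UNIV"
  if "0 \<le> \<rho>"
proof -
  have "(\<lambda>a. (norm z * \<rho>) ^ Suc a / fact (Suc a)) sums (exp (norm z * \<rho>) - 1)"
    by (rule exp_real_sums_Suc)
  then have "((\<lambda>a. (norm z * \<rho>) ^ Suc a / fact (Suc a)) has_sum (exp (norm z * \<rho>) - 1)) UNIV"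
    by (rule sums_nonneg_imp_has_sum) (use that in auto)
  moreover have "(\<lambda>a. norm (exp_coeff z a) * \<rho> ^ Suc a) = (\<lambda>a. (norm z * \<rho>) ^ Suc a / fact (Suc a))"
    by (simp add: norm_exp_coeff power_mult_distrib fun_eq_iff del: fact_Suc power_Suc)
  ultimately show ?thesis by simp
qed

lemma norm_exp_minus_one_le: "norm (exp (z::complex) - 1) \<le> exp (norm z) - 1"
proof -
  have "norm (exp z - 1) = norm (\<Sum>a. exp_coeff z a)" using exp_coeff_sums by (simp add: sums_iff)
  also have "\<dots> \<le> (\<Sum>a. norm (exp_coeff z a))"
    by (rule summable_norm) (use norm_exp_coeff_has_sum[of 1 z] in \<open>auto dest: has_sum_imp_sums simp: sums_iff\<close>)
  also have "\<dots> = exp (norm z) - 1"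
    using has_sum_imp_sums[OF norm_exp_coeff_has_sum[of 1 z]] by (simp add: sums_iff)
  finally show ?thesis .
qed

lemma restr_prod_one: "restr_prod {0} (\<lambda>_. idm) as 0 0 = 1"
  by (induction as) (simp_all add: idm_def)

lemma restr_pow_one: "restr_pow {0::int} (\<lambda>r t. w * idm r t) m 0 0 = w ^ m"
  by (induction m) (simp_all add: idm_def)

lemma weight_exp_coeff: "weight (exp_coeff z) as = z ^ total_power as * weight (\<lambda>a. 1 / fact (Suc a)) as"
  by (induction as) (simp_all add: exp_coeff_def power_add mult_ac del: fact_Suc)

(* The 1 x 1 instance of log_series_list_expansion, read through log (1 + (e^z - 1)) = z. *)
lemma log_exp_list_expansion:
  assumes z: "norm z < 1/2"
  shows "((\<lambda>as. log_coeff as * weight (exp_coeff z) as) has_sum z) UNIV"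
proof -
  let ?E = "\<lambda>(r::int) t. (exp z - 1) * idm r t"
  have ez: "exp (norm z) - 1 < 1"
  proof -
    have "exp (norm z) < exp (1/2)" using z by simp
    also have "\<dots> \<le> 2" by (rule exp_half_le2)
    finally show ?thesis by simp
  qed
  have hc: "(\<lambda>a. norm (exp_coeff z a) * 1 ^ Suc a) summable_on UNIV"
    using has_sum_imp_summable[OF norm_exp_coeff_has_sum[of 1 z]] by simp
  have hH: "(\<Sum>\<^sub>\<infinity>a. norm (exp_coeff z a) * 1 ^ Suc a) < 1"
    using infsumI[OF norm_exp_coeff_has_sum[of 1 z]] ez by simp
  have hE: "(\<lambda>a. exp_coeff z a * idm r t) sums ?E r t" for r t :: int
    using sums_mult2[OF exp_coeff_sums[of z], of "idm r t"] by simp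
  have hG: "(\<Sum>t\<in>{0::int}. norm (idm r t :: complex)) \<le> 1 ^ Suc a" if "r \<in> {0}" for a r
    using that by (simp add: idm_def)
  have B: "((\<lambda>as. log_coeff as * weight (exp_coeff z) as * chain_trace {0} (\<lambda>_. idm) as) has_sum log_series {0} ?E) UNIV"
    by (rule log_series_list_expansion[where S = "{0}" and \<rho> = 1 and G = "\<lambda>_. idm" and c = "exp_coeff z" and E = ?E])
      (use hG hc hE hH in auto)
  have w: "norm (exp z - 1) < 1" using norm_exp_minus_one_le[of z] ez by simp
  have "log_series {0} ?E = ln (1 + (exp z - 1))"
  proof -
    have "(\<lambda>m. - ((- (exp z - 1)) ^ m) / of_nat m) sums ln (1 + (exp z - 1))"
      by (rule Ln_series'[OF w])
    moreover have "(\<lambda>m. - ((- (exp z - 1)) ^ m) / of_nat m) = (\<lambda>m. - ((-1) ^ m) / of_nat m * restr_trace {0} ?E m)"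
      by (simp add: fun_eq_iff restr_trace_def restr_pow_one) (metis minus_diff_eq power_minus)
    ultimately show ?thesis by (simp add: log_series_def sums_iff)
  qed
  also have "\<dots> = z"
  proof -
    have "\<bar>Im z\<bar> < pi" using z abs_Im_le_cmod[of z] pi_gt3 by linarith
    then show ?thesis by simp
  qed
  finally show ?thesis using B by (simp add: chain_trace_def restr_prod_one)
qed

definition log_exp_coeff :: "nat \<Rightarrow> complex" where
  "log_exp_coeff k = (\<Sum>as\<in>lists_power k. log_coeff as * weight (\<lambda>a. 1 / fact (Suc a)) as)"

lemma log_exp_coeff_sums: "norm z < 1/2 \<Longrightarrow> (\<lambda>k. log_exp_coeff k * z ^ k) sums z"
proof -
  assume z: "norm z < 1/2"
  have "(\<lambda>k. \<Sum>as\<in>lists_power k. log_coeff as * weight (exp_coeff z) as) sums z"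
    by (rule sums_regroup_total_power[OF log_exp_list_expansion[OF z]])
  moreover have "(\<Sum>as\<in>lists_power k. log_coeff as * weight (exp_coeff z) as) = log_exp_coeff k * z ^ k" for k
  proof -
    have "(\<Sum>as\<in>lists_power k. log_coeff as * weight (exp_coeff z) as) = (\<Sum>as\<in>lists_power k. log_coeff as * weight (\<lambda>a. 1 / fact (Suc a)) as * z ^ k)"
      by (intro sum.cong refl) (auto simp: lists_power_def weight_exp_coeff)
    then show ?thesis by (simp add: log_exp_coeff_def sum_distrib_right)
  qed
  ultimately show ?thesis by simp
qed

lemma log_exp_coeff_eq_indicator: "log_exp_coeff k = (if k = 1 then 1 else 0)"
proof -
  define F where "F = Abs_fps log_exp_coeff"
  have ev: "eval_fps F z = z" if "norm z < 1/2" for z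
    using log_exp_coeff_sums[OF that] by (simp add: eval_fps_def F_def sums_iff)
  have "summable (\<lambda>k. log_exp_coeff k * (1/4) ^ k)" using log_exp_coeff_sums[of "1/4"] by (auto simp: sums_iff)
  then have "conv_radius log_exp_coeff \<ge> norm (1/4 :: complex)" by (rule conv_radius_geI)
  then have rad: "fps_conv_radius F > 0"
    unfolding F_def fps_conv_radius_def by (auto simp: less_le_trans[of 0 "ereal (1/4)"] intro: less_le_trans[of _ "ereal (1/4)"])
  have "(\<lambda>z. z) has_fps_expansion F"
    unfolding has_fps_expansion_def
  proof (intro conjI rad)
    have "eventually (\<lambda>x. x \<in> ball 0 (1/2)) (nhds (0::complex))" by (rule eventually_nhds_ball) simp
    then show "\<forall>\<^sub>F z in nhds 0. eval_fps F z = z" by eventually_elim (simp add: ev)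
  qed
  then have "F = fps_X" by (rule fps_expansion_unique_complex[OF _ has_fps_expansion_fps_X])
  have "log_exp_coeff k = fps_nth F k" by (simp add: F_def)
  also have "\<dots> = fps_nth fps_X k" using \<open>F = fps_X\<close> by simp
  finally show ?thesis by simp
qed

lemma log_exp_list_expansion_graded:
  fixes y :: "nat \<Rightarrow> complex"
  assumes \<rho>: "0 \<le> \<rho>" and Y: "\<And>k. norm (y k) \<le> Y * \<rho> ^ k" and small: "exp (norm z * \<rho>) - 1 < 1"
  shows "((\<lambda>as. log_coeff as * weight (exp_coeff z) as * y (total_power as)) has_sum z * y 1) UNIV"
proof -
  define h where "h a = norm (exp_coeff z a) * \<rho> ^ Suc a" for a
  have hnn: "0 \<le> h a" for a using \<rho> by (simp add: h_def)
  have hs: "(h has_sum (exp (norm z * \<rho>) - 1)) UNIV"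
    unfolding h_def[abs_def] by (rule norm_exp_coeff_has_sum[OF \<rho>])
  have Ws: "weight h summable_on UNIV" by (rule weight_summable[OF hnn hs small])
  have dom: "norm (log_coeff as * weight (exp_coeff z) as * y (total_power as)) \<le> Y * weight h as" for as
  proof -
    have "norm (log_coeff as * weight (exp_coeff z) as * y (total_power as)) \<le> 1 * norm (weight (exp_coeff z) as) * (Y * \<rho> ^ total_power as)"
      unfolding norm_mult by (intro mult_mono norm_log_coeff Y) auto
    also have "\<dots> = Y * weight h as" by (simp only: h_def[abs_def] weight_norm_mult_pow) simp
    finally show ?thesis .
  qed
  have Fs: "(\<lambda>as. log_coeff as * weight (exp_coeff z) as * y (total_power as)) summable_on UNIV"
    by (rule abs_summable_summable, rule Infinite_Sum.abs_summable_on_comparison_test'[OF summable_on_cmult_right[OF Ws] dom])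
  define T where "T = (\<Sum>\<^sub>\<infinity>as. log_coeff as * weight (exp_coeff z) as * y (total_power as))"
  have FT: "((\<lambda>as. log_coeff as * weight (exp_coeff z) as * y (total_power as)) has_sum T) UNIV" using Fs by (simp add: T_def)
  have "(\<lambda>k. \<Sum>as\<in>lists_power k. log_coeff as * weight (exp_coeff z) as * y (total_power as)) sums T" by (rule sums_regroup_total_power[OF FT])
  moreover have "(\<Sum>as\<in>lists_power k. log_coeff as * weight (exp_coeff z) as * y (total_power as)) = (if k = 1 then z * y 1 else 0)" for k
  proof -
    have "(\<Sum>as\<in>lists_power k. log_coeff as * weight (exp_coeff z) as * y (total_power as)) = (\<Sum>as\<in>lists_power k. log_coeff as * weight (\<lambda>a. 1 / fact (Suc a)) as * z ^ k * y k)"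
      by (intro sum.cong refl) (auto simp: lists_power_def weight_exp_coeff)
    also have "\<dots> = log_exp_coeff k * z ^ k * y k" by (simp add: log_exp_coeff_def sum_distrib_right)
    finally show ?thesis by (simp add: log_exp_coeff_eq_indicator)
  qed
  ultimately have "(\<lambda>k. if k = 1 then z * y 1 else 0) sums T" by simp
  then have "T = z * y 1" using sums_single[of 1 "\<lambda>_. z * y 1"] sums_unique2 by blast
  then show ?thesis using FT by simp
qed

section \<open>The cut logarithm\<close>

definition cut_log :: "nat \<Rightarrow> int mat \<Rightarrow> int \<Rightarrow> complex \<Rightarrow> complex" where
  "cut_log w A c z = (\<Sum>\<^sub>\<infinity>as. log_coeff as * weight (exp_coeff z) as * cut_defect w A c as)"

lemma log_series_mexp_list_expansion:
  fixes A :: "int mat" and z :: complex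
  assumes band: "banded w A" and rs: "row_sum_le \<rho> A" and fin: "finite S"
    and small: "exp (norm z * \<rho>) - 1 < 1"
  shows "((\<lambda>as. log_coeff as * weight (exp_coeff z) as * chain_trace S (\<lambda>a. mpow A (Suc a)) as)
    has_sum log_series S (\<lambda>r s. mexp (mscale z A) r s - idm r s)) UNIV"
proof -
  have \<rho>: "0 \<le> \<rho>" by (rule row_sum_le_nonneg[OF rs])
  have hcs: "((\<lambda>a. norm (exp_coeff z a) * \<rho> ^ Suc a) has_sum (exp (norm z * \<rho>) - 1)) UNIV"
    by (rule norm_exp_coeff_has_sum[OF \<rho>])
  show ?thesis
  proof (rule log_series_list_expansion[OF fin \<rho>])
    show "(\<Sum>t\<in>S. norm (mpow A (Suc a) r t)) \<le> \<rho> ^ Suc a" for a r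
      using row_sum_le_mpow[OF band rs, of "Suc a"] fin by (auto simp: row_sum_le_def)
    show "(\<lambda>a. norm (exp_coeff z a) * \<rho> ^ Suc a) summable_on UNIV"
      using hcs by (rule has_sum_imp_summable)
    show "(\<Sum>\<^sub>\<infinity>a. norm (exp_coeff z a) * \<rho> ^ Suc a) < 1"
      using infsumI[OF hcs] small by simp
    show "(\<lambda>a. exp_coeff z a * mpow A (Suc a) r t) sums (mexp (mscale z A) r t - idm r t)" for r t
      by (rule mexp_minus_idm_sums[OF band rs])
  qed
qed

lemma cut_log_eq_log_series:
  fixes A :: "int mat" and z :: complex
  assumes band: "banded w A" and rs: "row_sum_le \<rho> A" and lw: "vanishes_below L A"
    and small: "exp (norm z * \<rho>) - 1 < 1"
  shows "cut_log w A c z = log_series {L..<c} (\<lambda>r s. mexp (mscale z A) r s - idm r s) - z * (\<Sum>r\<in>{L..<c}. A r r)"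
proof -
  let ?S = "{L..<c}"
  let ?E = "\<lambda>r s. mexp (mscale z A) r s - idm r s"
  let ?w = "\<lambda>as. log_coeff as * weight (exp_coeff z) as"
  define y where "y k = (\<Sum>r\<in>?S. mpow A k r r)" for k
  have yb: "norm (y k) \<le> real (card ?S) * \<rho> ^ k" for k
  proof -
    have "norm (y k) \<le> (\<Sum>r\<in>?S. norm (mpow A k r r))" unfolding y_def by (rule norm_sum)
    also have "\<dots> \<le> (\<Sum>r\<in>?S. \<rho> ^ k)"
      by (intro sum_mono norm_mpow_le[OF band rs])
    finally show ?thesis by simp
  qed
  have "((\<lambda>as. ?w as * chain_trace ?S (\<lambda>a. mpow A (Suc a)) as + (- 1) * (?w as * y (total_power as)))
           has_sum log_series ?S ?E + (- 1) * (z * y 1)) UNIV"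
    by (intro has_sum_add log_series_mexp_list_expansion[OF band rs _ small] has_sum_cmult_right
        log_exp_list_expansion_graded[OF row_sum_le_nonneg[OF rs] yb small]) simp
  moreover have "?w as * chain_trace ?S (\<lambda>a. mpow A (Suc a)) as + (- 1) * (?w as * y (total_power as))
            = ?w as * cut_defect w A c as" for as
  proof (cases "as = []")
    case True then show ?thesis by (simp add: log_coeff_def)
  next
    case False
    have d: "chain_trace ?S (\<lambda>a. mpow A (Suc a)) as - y (total_power as) = cut_defect w A c as"
      unfolding chain_trace_def y_def by (rule cut_defect_eq_trace_difference[OF band lw False])
    show ?thesis by (simp add: algebra_simps flip: d)
  qed
  ultimately have "cut_log w A c z = log_series ?S ?E - z * y 1"
    unfolding cut_log_def by (simp add: infsumI)
  then show ?thesis by (simp add: y_def mmult_idm_right)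
qed

lemma exp_cut_log:
  fixes A :: "int mat" and z :: complex
  assumes band: "banded w A" and rs: "row_sum_le \<rho> A" and lw: "vanishes_below L A"
    and small: "exp (norm z * \<rho>) - 1 < 1"
  shows "exp (- z * (\<Sum>r\<in>{L..<c}. A r r)) * det_on {L..<c} (\<lambda>r s. idm r s + (mexp (mscale z A) r s - idm r s))
         = exp (cut_log w A c z)"
proof -
  have "det_on {L..<c} (\<lambda>r s. idm r s + (mexp (mscale z A) r s - idm r s))
      = exp (log_series {L..<c} (\<lambda>r s. mexp (mscale z A) r s - idm r s))"
    by (rule det_on_eq_exp_log_series[OF _ row_sum_mexp_minus_idm_le[OF band rs] small]) simp_all
  then show ?thesis
    unfolding cut_log_eq_log_series[OF assms] by (simp add: mult_exp_exp algebra_simps)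
qed

section \<open>Tails of infinite sums\<close>

lemma infsum_tail_small:
  fixes g :: "'a \<Rightarrow> real"
  assumes g0: "\<And>x. 0 \<le> g x" and gs: "g summable_on UNIV" and e: "\<epsilon> > 0"
  obtains F0 where "finite F0" "\<And>F. F0 \<subseteq> F \<Longrightarrow> infsum g (UNIV - F) \<le> \<epsilon>"
proof -
  obtain F0 where F0: "finite F0" "dist (sum g F0) (infsum g UNIV) \<le> \<epsilon>"
    using infsum_finite_approximation[OF gs e] by auto
  have sc: "g summable_on (UNIV - F)" for F by (rule summable_on_subset_banach[OF gs]) auto
  have split: "infsum g UNIV = sum g F0 + infsum g (UNIV - F0)"
  proof -
    have "infsum g (F0 \<union> (UNIV - F0)) = infsum g F0 + infsum g (UNIV - F0)"
      by (rule infsum_Un_disjoint) (use F0 sc in auto)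
    then show ?thesis using F0 by simp
  qed
  show ?thesis
  proof (rule that[OF F0(1)])
    fix F assume F: "F0 \<subseteq> F"
    have "infsum g (UNIV - F) \<le> infsum g (UNIV - F0)"
      by (rule infsum_mono_neutral[OF sc sc]) (use F g0 in auto)
    also have "\<dots> \<le> \<epsilon>" using F0(2) split by (simp add: dist_real_def)
    finally show "infsum g (UNIV - F) \<le> \<epsilon>" .
  qed
qed

lemma infsum_tendsto_zero_dominated:
  fixes f :: "nat \<Rightarrow> 'a \<Rightarrow> real" and g :: "'a \<Rightarrow> real"
  assumes gs: "g summable_on UNIV"
    and f0: "\<And>x a. 0 \<le> f x a" and fg: "\<And>x a. f x a \<le> g a"
    and fl: "\<And>a. ((\<lambda>x. f x a) \<longlongrightarrow> 0) sequentially"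
  shows "((\<lambda>x. infsum (f x) UNIV) \<longlongrightarrow> 0) sequentially"
proof (rule tendstoI)
  fix e :: real assume e: "e > 0"
  have g0: "0 \<le> g a" for a using f0 fg order_trans by blast
  obtain F0 where F0: "finite F0" "\<And>F. F0 \<subseteq> F \<Longrightarrow> infsum g (UNIV - F) \<le> e / 2"
    using infsum_tail_small[OF g0 gs, of "e/2"] e by auto
  have fs: "f x summable_on A" for x A
    by (rule summable_on_comparison_test[OF summable_on_subset_banach[OF gs]]) (use f0 fg in auto)
  have "((\<lambda>x. sum (f x) F0) \<longlongrightarrow> (\<Sum>a\<in>F0. 0)) sequentially"
    by (intro tendsto_sum fl)
  then have t0: "((\<lambda>x. sum (f x) F0) \<longlongrightarrow> 0) sequentially" by simp
  have "eventually (\<lambda>x. sum (f x) F0 < e / 2) sequentially"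
    using order_tendstoD(2)[OF t0, of "e/2"] e by simp
  then show "eventually (\<lambda>x. dist (infsum (f x) UNIV) 0 < e) sequentially"
  proof eventually_elim
    case (elim x)
    have "infsum (f x) UNIV = infsum (f x) (F0 \<union> (UNIV - F0))" by simp
    also have "\<dots> = sum (f x) F0 + infsum (f x) (UNIV - F0)"
      by (subst infsum_Un_disjoint) (use F0 fs in auto)
    finally have spl: "infsum (f x) UNIV = sum (f x) F0 + infsum (f x) (UNIV - F0)" .
    have "infsum (f x) (UNIV - F0) \<le> infsum g (UNIV - F0)"
      by (rule infsum_mono[OF fs summable_on_subset_banach[OF gs]]) (use fg in auto)
    then have "sum (f x) F0 + infsum (f x) (UNIV - F0) < e"
      using elim F0(2)[of F0] by simp
    moreover have "0 \<le> infsum (f x) UNIV" by (rule infsum_nonneg) (use f0 in auto)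
    ultimately show ?case
      using spl by (simp add: dist_real_def)
  qed
qed

section \<open>Convergence of the cut logarithm\<close>

lemma norm_weight_exp_coeff:
  assumes "norm z \<le> \<delta>"
  shows "norm (weight (exp_coeff z) as) \<le> weight (\<lambda>a. \<delta> ^ Suc a / fact (Suc a)) as"
proof (induction as)
  case Nil then show ?case by simp
next
  case (Cons a as)
  have \<delta>0: "0 \<le> \<delta>" using assms norm_ge_zero order_trans by blast
  have c: "norm (exp_coeff z a) \<le> \<delta> ^ Suc a / fact (Suc a)"
    unfolding norm_exp_coeff by (intro divide_right_mono power_mono assms) auto
  have "norm (weight (exp_coeff z) (a # as)) = norm (exp_coeff z a) * norm (weight (exp_coeff z) as)" by (simp add: norm_mult)
  also have "\<dots> \<le> (\<delta> ^ Suc a / fact (Suc a)) * weight (\<lambda>a. \<delta> ^ Suc a / fact (Suc a)) as"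
    by (rule mult_mono[OF c Cons.IH]) (use \<delta>0 in auto)
  finally show ?case by simp
qed

lemma weight_mult_pow: "weight (\<lambda>a. h a * (\<sigma>::real) ^ Suc a) as = weight h as * \<sigma> ^ total_power as"
  by (induction as) (simp_all add: power_add mult_ac del: power_Suc)

definition majorant :: "real \<Rightarrow> real \<Rightarrow> nat list \<Rightarrow> real" where
  "majorant \<rho> \<delta> as = weight (\<lambda>a. (2 * \<rho> * \<delta>) ^ Suc a / fact (Suc a)) as"

lemma majorant_summable:
  assumes "0 \<le> \<rho>" "0 \<le> \<delta>" "exp (2 * \<rho> * \<delta>) - 1 < 1"
  shows "majorant \<rho> \<delta> summable_on UNIV"
proof -
  have "((\<lambda>a. (2 * \<rho> * \<delta>) ^ Suc a / fact (Suc a)) has_sum (exp (2 * \<rho> * \<delta>) - 1)) UNIV"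
    by (rule sums_nonneg_imp_has_sum[OF exp_real_sums_Suc]) (use assms in auto)
  then show ?thesis unfolding majorant_def[abs_def]
    by (rule weight_summable[rotated]) (use assms in auto)
qed

lemma majorant_nonneg: "0 \<le> \<rho> \<Longrightarrow> 0 \<le> \<delta> \<Longrightarrow> 0 \<le> majorant \<rho> \<delta> as"
  unfolding majorant_def by (rule weight_nonneg) auto

lemma norm_cut_log_term_le:
  assumes "banded w A" "row_sum_le \<rho> A" "norm z \<le> \<delta>"
  shows "norm (log_coeff as * weight (exp_coeff z) as * cut_defect w A c as) \<le> 2 * real w * majorant \<rho> \<delta> as"
proof -
  have \<rho>: "0 \<le> \<rho>" using row_sum_le_nonneg[OF assms(2)] .
  have \<delta>0: "0 \<le> \<delta>" using assms(3) norm_ge_zero order_trans by blast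
  have wnn: "0 \<le> weight (\<lambda>a. \<delta> ^ Suc a / fact (Suc a)) as" by (rule weight_nonneg) (use \<delta>0 in simp)
  have "norm (log_coeff as * weight (exp_coeff z) as * cut_defect w A c as) \<le> 1 * weight (\<lambda>a. \<delta> ^ Suc a / fact (Suc a)) as * (2 * real w * (2 * \<rho>) ^ total_power as)"
    unfolding norm_mult by (intro mult_mono norm_log_coeff norm_weight_exp_coeff norm_cut_defect_le assms) (use wnn in auto)
  also have "\<dots> = 2 * real w * (weight (\<lambda>a. \<delta> ^ Suc a / fact (Suc a)) as * (2 * \<rho>) ^ total_power as)" by simp
  also have "weight (\<lambda>a. \<delta> ^ Suc a / fact (Suc a)) as * (2 * \<rho>) ^ total_power as = majorant \<rho> \<delta> as"
    unfolding majorant_def weight_mult_pow[symmetric] by (simp add: power_mult_distrib mult_ac del: fact_Suc power_Suc)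
  finally show ?thesis .
qed

lemma cut_log_summable:
  assumes "banded w A" "row_sum_le \<rho> A" "norm z \<le> \<delta>" "0 \<le> \<delta>" "exp (2 * \<rho> * \<delta>) - 1 < 1"
  shows "(\<lambda>as. log_coeff as * weight (exp_coeff z) as * cut_defect w A c as) summable_on UNIV"
proof -
  have \<rho>: "0 \<le> \<rho>" using row_sum_le_nonneg[OF assms(2)] .
  show ?thesis
    by (rule abs_summable_summable, rule Infinite_Sum.abs_summable_on_comparison_test'[OF summable_on_cmult_right[OF majorant_summable[OF \<rho> assms(4,5)]]])
       (rule norm_cut_log_term_le[OF assms(1-3)])
qed

lemma cut_log_has_sum:
  assumes "banded w A" "row_sum_le \<rho> A" "norm z \<le> \<delta>" "0 \<le> \<delta>" "exp (2 * \<rho> * \<delta>) - 1 < 1"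
  shows "((\<lambda>as. log_coeff as * weight (exp_coeff z) as * cut_defect w A c as) has_sum cut_log w A c z) UNIV"
  unfolding cut_log_def by (rule has_sum_infsum[OF cut_log_summable[OF assms]])

lemma cut_log_shift: "cut_log w A c z = cut_log w (shift c A) 0 z"
  unfolding cut_log_def by (simp add: cut_defect_shift[of w A c])

lemma norm_cut_log_le:
  assumes "banded w A" "row_sum_le \<rho> A" "norm z \<le> \<delta>" "0 \<le> \<delta>" "exp (2 * \<rho> * \<delta>) - 1 < 1"
  shows "norm (cut_log w A c z) \<le> (\<Sum>\<^sub>\<infinity>as. 2 * real w * majorant \<rho> \<delta> as)"
proof -
  have \<rho>: "0 \<le> \<rho>" by (rule row_sum_le_nonneg[OF assms(2)])
  have gs: "(\<lambda>as. 2 * real w * majorant \<rho> \<delta> as) summable_on UNIV"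
    by (rule summable_on_cmult_right[OF majorant_summable]) (use \<rho> assms in auto)
  show ?thesis
    by (rule norm_infsum_le[OF cut_log_has_sum[OF assms] has_sum_infsum[OF gs]])
       (rule norm_cut_log_term_le[OF assms(1-3)])
qed

lemma weighted_cut_defect_diff_le:
  assumes "banded w A" "row_sum_le \<rho> A" "banded w A'" "row_sum_le \<rho> A'" "0 \<le> \<delta>"
  shows "weight (\<lambda>a. \<delta> ^ Suc a / fact (Suc a)) as * norm (cut_defect w A' c as - cut_defect w A c as)
    \<le> 4 * real w * majorant \<rho> \<delta> as"
proof -
  let ?V = "weight (\<lambda>a. \<delta> ^ Suc a / fact (Suc a)) as"
  have V0: "0 \<le> ?V" by (rule weight_nonneg) (use assms(5) in simp)
  have "norm (cut_defect w A' c as - cut_defect w A c as) \<le> norm (cut_defect w A' c as) + norm (cut_defect w A c as)"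
    by (rule norm_triangle_ineq4)
  also have "\<dots> \<le> 2 * real w * (2 * \<rho>) ^ total_power as + 2 * real w * (2 * \<rho>) ^ total_power as"
    by (intro add_mono norm_cut_defect_le assms(1-4))
  finally have "norm (cut_defect w A' c as - cut_defect w A c as) \<le> 4 * real w * (2 * \<rho>) ^ total_power as"
    by (simp add: power_mult_distrib mult_ac)
  then have "?V * norm (cut_defect w A' c as - cut_defect w A c as) \<le> ?V * (4 * real w * (2 * \<rho>) ^ total_power as)"
    by (rule mult_left_mono[OF _ V0])
  also have "\<dots> = 4 * real w * (?V * (2 * \<rho>) ^ total_power as)" by (simp add: mult_ac)
  also have "?V * (2 * \<rho>) ^ total_power as = majorant \<rho> \<delta> as"
    unfolding majorant_def weight_mult_pow[symmetric]
    by (simp add: power_mult_distrib mult_ac del: fact_Suc power_Suc)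
  finally show ?thesis .
qed

lemma dist_cut_log_le:
  assumes "banded w A" "row_sum_le \<rho> A" "banded w A'" "row_sum_le \<rho> A'"
    and nz: "norm z \<le> \<delta>" and small: "exp (2 * \<rho> * \<delta>) - 1 < 1"
  shows "dist (cut_log w A' c z) (cut_log w A c z)
    \<le> (\<Sum>\<^sub>\<infinity>as. weight (\<lambda>a. \<delta> ^ Suc a / fact (Suc a)) as * norm (cut_defect w A' c as - cut_defect w A c as))"
    (is "_ \<le> infsum ?D UNIV")
proof -
  let ?t = "\<lambda>B as. log_coeff as * weight (exp_coeff z) as * cut_defect w B c as"
  have \<delta>: "0 \<le> \<delta>" using nz norm_ge_zero order_trans by blast
  have \<rho>: "0 \<le> \<rho>" by (rule row_sum_le_nonneg[OF assms(2)])
  have Ds: "?D summable_on UNIV"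
    by (rule summable_on_comparison_test[OF summable_on_cmult_right[OF majorant_summable[OF \<rho> \<delta> small]]])
       (use weighted_cut_defect_diff_le[OF assms(1-4) \<delta>] \<delta> in \<open>auto intro!: mult_nonneg_nonneg weight_nonneg\<close>)
  have "((\<lambda>as. ?t A' as + (-1) * ?t A as) has_sum cut_log w A' c z + (-1) * cut_log w A c z) UNIV"
    by (intro has_sum_add has_sum_cmult_right cut_log_has_sum[OF assms(3,4) nz \<delta> small]
        cut_log_has_sum[OF assms(1,2) nz \<delta> small])
  then have "norm (cut_log w A' c z + (-1) * cut_log w A c z) \<le> infsum ?D UNIV"
  proof (rule norm_infsum_le[OF _ has_sum_infsum[OF Ds]])
    fix as
    have "norm (?t A' as + (-1) * ?t A as)
        = norm (log_coeff as) * norm (weight (exp_coeff z) as) * norm (cut_defect w A' c as - cut_defect w A c as)"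
      by (simp add: norm_mult[symmetric] algebra_simps)
    also have "\<dots> \<le> 1 * weight (\<lambda>a. \<delta> ^ Suc a / fact (Suc a)) as * norm (cut_defect w A' c as - cut_defect w A c as)"
      by (intro mult_mono norm_log_coeff norm_weight_exp_coeff nz) (auto intro!: weight_nonneg simp: \<delta>)
    finally show "norm (?t A' as + (-1) * ?t A as) \<le> ?D as" by simp
  qed
  then show ?thesis by (simp add: dist_norm)
qed

lemma cut_log_uniform_limit:
  fixes As :: "nat \<Rightarrow> int mat"
  assumes band: "\<And>x. banded w (As x)" and rs: "\<And>x. row_sum_le \<rho> (As x)"
    and lim: "\<And>r s. ((\<lambda>x. As x r s) \<longlongrightarrow> A r s) sequentially"
    and \<delta>: "0 \<le> \<delta>" and small: "exp (2 * \<rho> * \<delta>) - 1 < 1"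
  shows "uniform_limit (cball 0 \<delta>) (\<lambda>x z. cut_log w (As x) c z) (cut_log w A c) sequentially"
proof -
  have bA: "banded w A" by (rule banded_limit[OF band lim])
  have rsA: "row_sum_le \<rho> A" by (rule row_sum_le_limit[OF rs lim])
  have \<rho>: "0 \<le> \<rho>" by (rule row_sum_le_nonneg[OF rsA])
  define D where "D x as = weight (\<lambda>a. \<delta> ^ Suc a / fact (Suc a)) as * norm (cut_defect w (As x) c as - cut_defect w A c as)"
    for x as
  have "((\<lambda>x. cut_defect w (As x) c as - cut_defect w A c as) \<longlongrightarrow> 0) sequentially" for as
    using cut_defect_tendsto[OF band lim, of c as] by (simp add: LIM_zero)
  then have "((\<lambda>x. D x as) \<longlongrightarrow> 0) sequentially" for as
    unfolding D_def by (intro tendsto_mult_right_zero) (simp add: tendsto_norm_zero_iff)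
  moreover have "0 \<le> D x as" "D x as \<le> 4 * real w * majorant \<rho> \<delta> as" for x as
    unfolding D_def using \<delta> weighted_cut_defect_diff_le[OF bA rsA band rs \<delta>]
    by (auto intro!: mult_nonneg_nonneg weight_nonneg)
  ultimately have Dsum: "((\<lambda>x. infsum (D x) UNIV) \<longlongrightarrow> 0) sequentially"
    by (intro infsum_tendsto_zero_dominated[OF summable_on_cmult_right[OF majorant_summable[OF \<rho> \<delta> small]]])
  show ?thesis
  proof (rule uniform_limitI)
    fix e :: real assume "e > 0"
    with Dsum have "eventually (\<lambda>x. infsum (D x) UNIV < e) sequentially"
      by (rule order_tendstoD(2))
    then show "\<forall>\<^sub>F x in sequentially. \<forall>z\<in>cball 0 \<delta>. dist (cut_log w (As x) c z) (cut_log w A c z) < e"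
    proof eventually_elim
      case (elim x)
      show ?case
      proof
        fix z :: complex assume "z \<in> cball 0 \<delta>"
        then have "dist (cut_log w (As x) c z) (cut_log w A c z) \<le> infsum (D x) UNIV"
          unfolding D_def by (intro dist_cut_log_le[OF bA rsA band rs _ small]) simp
        then show "dist (cut_log w (As x) c z) (cut_log w A c z) < e" using elim by linarith
      qed
    qed
  qed
qed

lemma uniform_limit_finite_subsets_infsum:
  fixes t :: "'z \<Rightarrow> 'a \<Rightarrow> 'b::banach" and g :: "'a \<Rightarrow> real"
  assumes bound: "\<And>z a. z \<in> K \<Longrightarrow> norm (t z a) \<le> g a" and g0: "\<And>a. 0 \<le> g a"
    and gs: "g summable_on UNIV"
  shows "uniform_limit K (\<lambda>Y z. \<Sum>a\<in>Y. t z a) (\<lambda>z. \<Sum>\<^sub>\<infinity>a. t z a) (finite_subsets_at_top UNIV)"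
proof (rule uniform_limitI)
  fix e :: real assume e: "e > 0"
  obtain F0 where F0: "finite F0" "\<And>F. F0 \<subseteq> F \<Longrightarrow> infsum g (UNIV - F) \<le> e / 2"
    using infsum_tail_small[OF g0 gs, of "e/2"] e by auto
  show "\<forall>\<^sub>F Y in finite_subsets_at_top UNIV. \<forall>z\<in>K. dist (\<Sum>a\<in>Y. t z a) (\<Sum>\<^sub>\<infinity>a. t z a) < e"
    unfolding eventually_finite_subsets_at_top
  proof (intro exI[of _ F0] conjI allI impI ballI)
    fix Y and z assume Y: "finite Y \<and> F0 \<subseteq> Y \<and> Y \<subseteq> UNIV" and z: "z \<in> K"
    have ts: "t z summable_on (UNIV - Y)"
      by (rule abs_summable_summable, rule Infinite_Sum.abs_summable_on_comparison_test'
          [OF summable_on_subset_banach[OF gs]]) (use bound z in auto)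
    have gsc: "g summable_on (UNIV - Y)" by (rule summable_on_subset_banach[OF gs]) auto
    have "(\<Sum>\<^sub>\<infinity>a. t z a) = infsum (t z) (Y \<union> (UNIV - Y))" by simp
    also have "\<dots> = (\<Sum>a\<in>Y. t z a) + infsum (t z) (UNIV - Y)"
      by (subst infsum_Un_disjoint) (use Y ts in auto)
    finally have "dist (\<Sum>a\<in>Y. t z a) (\<Sum>\<^sub>\<infinity>a. t z a) = norm (infsum (t z) (UNIV - Y))"
      by (simp add: dist_norm)
    also have "\<dots> \<le> infsum g (UNIV - Y)"
      by (rule norm_infsum_le[OF has_sum_infsum[OF ts] has_sum_infsum[OF gsc]]) (use bound z in auto)
    also have "\<dots> \<le> e / 2" using F0(2) Y by blast
    finally show "dist (\<Sum>a\<in>Y. t z a) (\<Sum>\<^sub>\<infinity>a. t z a) < e" using e by linarith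
  qed (use F0 in auto)
qed

lemma cut_log_holomorphic:
  assumes "banded w A" "row_sum_le \<rho> A" and \<delta>: "0 \<le> \<delta>" and small: "exp (2 * \<rho> * \<delta>) - 1 < 1"
  shows "cut_log w A c holomorphic_on ball 0 \<delta>"
proof -
  have \<rho>: "0 \<le> \<rho>" by (rule row_sum_le_nonneg[OF assms(2)])
  let ?t = "\<lambda>z as. log_coeff as * (z ^ total_power as * weight (\<lambda>a. 1 / fact (Suc a)) as) * cut_defect w A c as"
  have "uniform_limit (cball 0 \<delta>) (\<lambda>Y z. \<Sum>as\<in>Y. ?t z as) (\<lambda>z. \<Sum>\<^sub>\<infinity>as. ?t z as) (finite_subsets_at_top UNIV)"
  proof (rule uniform_limit_finite_subsets_infsum)
    show "norm (?t z as) \<le> 2 * real w * majorant \<rho> \<delta> as" if "z \<in> cball 0 \<delta>" for z as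
      using norm_cut_log_term_le[OF assms(1,2), of z \<delta> as c] that by (simp add: weight_exp_coeff)
    show "0 \<le> 2 * real w * majorant \<rho> \<delta> as" for as using majorant_nonneg[OF \<rho> \<delta>] by simp
    show "(\<lambda>as. 2 * real w * majorant \<rho> \<delta> as) summable_on UNIV"
      by (intro summable_on_cmult_right majorant_summable \<rho> \<delta> small)
  qed
  moreover have "(\<lambda>z. \<Sum>\<^sub>\<infinity>as. ?t z as) = cut_log w A c"
    unfolding cut_log_def weight_exp_coeff ..
  ultimately have ul: "uniform_limit (cball 0 \<delta>) (\<lambda>Y z. \<Sum>as\<in>Y. ?t z as) (cut_log w A c) (finite_subsets_at_top UNIV)"
    by (simp only:)
  have "\<forall>\<^sub>F Y in finite_subsets_at_top UNIV. continuous_on (cball 0 \<delta>) (\<lambda>z. \<Sum>as\<in>Y. ?t z as)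
      \<and> (\<lambda>z. \<Sum>as\<in>Y. ?t z as) holomorphic_on ball 0 \<delta>"
    by (intro always_eventually allI conjI) (intro continuous_intros holomorphic_intros)+
  from holomorphic_uniform_limit[OF this ul finite_subsets_at_top_neq_bot] show ?thesis by blast
qed

section \<open>Finite and half-line sections\<close>

lemma mmult_diagonal_right:
  fixes K D :: "'i \<Rightarrow> 'i \<Rightarrow> complex"
  assumes "\<And>t s. t \<noteq> s \<Longrightarrow> D t s = 0"
  shows "mmult K D r s = K r s * D s s"
proof -
  have "mmult K D r s = (\<Sum>\<^sub>\<infinity>t\<in>{s}. K r t * D t s)"
    unfolding mmult_def by (rule infsum_cong_neutral) (use assms in auto)
  then show ?thesis by simp
qed

lemma det_on_cong:
  fixes M M' :: "'i \<Rightarrow> 'i \<Rightarrow> complex"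
  assumes "finite S" "\<And>r s. r \<in> S \<Longrightarrow> s \<in> S \<Longrightarrow> M r s = M' r s"
  shows "det_on S M = det_on S M'"
  using det_on_reindex[OF assms(1) bij_betw_id[of S], of M M'] assms(2) by simp

lemma fredholm_det_eq_det_on:
  fixes K :: "'i \<Rightarrow> 'i \<Rightarrow> complex"
  assumes T: "finite T" and supp: "\<And>r s. K r s \<noteq> 0 \<Longrightarrow> s \<in> T"
  shows "fredholm_det K = det_on T (\<lambda>r s. idm r s + K r s)"
proof -
  define SS where "SS = {s. \<exists>r. K r s \<noteq> 0}"
  define MM where "MM = (\<lambda>r s. idm r s + K r s)"
  have ST: "SS \<subseteq> T" using supp by (auto simp: SS_def)
  have colz: "K r y = 0" if "y \<notin> SS" for r y using that by (auto simp: SS_def)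
  have zero: "(\<Prod>i\<in>T. MM i (p i)) = 0" if p: "p permutes T" and np: "\<not> p permutes SS" for p
  proof -
    obtain y where y: "y \<notin> SS" "p y \<noteq> y"
      using np p unfolding permutes_def by blast
    have yT: "y \<in> T" using y(2) p by (meson permutes_not_in)
    define j0 where "j0 = inv_into UNIV p y"
    have pi: "p j0 = y" unfolding j0_def using permutes_inverses(1)[OF p] .
    have iT: "j0 \<in> T" using pi yT p by (metis permutes_in_image)
    have iy: "j0 \<noteq> y" using pi y(2) by auto
    have "MM j0 (p j0) = 0" using pi iy colz[OF y(1)] by (simp add: MM_def idm_def)
    then show ?thesis using iT T by (meson prod_zero_iff)
  qed
  have eqS: "(\<Prod>i\<in>T. MM i (p i)) = (\<Prod>i\<in>SS. MM i (p i))" if p: "p permutes SS" for p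
  proof -
    have "(\<Prod>i\<in>T. MM i (p i)) = (\<Prod>i\<in>SS. MM i (p i)) * (\<Prod>i\<in>T - SS. MM i (p i))"
      using ST T by (metis prod.subset_diff mult.commute)
    moreover have "(\<Prod>i\<in>T - SS. MM i (p i)) = 1"
    proof (rule prod.neutral, intro ballI)
      fix i assume "i \<in> T - SS"
      then have "p i = i" "i \<notin> SS" using p by (auto simp: permutes_not_in)
      then show "MM i (p i) = 1" using colz by (simp add: MM_def idm_def)
    qed
    ultimately show ?thesis by simp
  qed
  have "det_on T MM = (\<Sum>p\<in>{p. p permutes SS}. of_int (sign p) * (\<Prod>i\<in>T. MM i (p i)))"
    unfolding det_on_def
  proof (rule sum.mono_neutral_cong_right)
    show "finite {p. p permutes T}" using finite_permutations[OF T] .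
    show "{p. p permutes SS} \<subseteq> {p. p permutes T}" using permutes_subset ST by blast
    show "\<forall>p\<in>{p. p permutes T} - {p. p permutes SS}. of_int (sign p) * (\<Prod>i\<in>T. MM i (p i)) = 0"
      using zero by auto
  qed simp
  also have "\<dots> = det_on SS MM"
    unfolding det_on_def by (intro sum.cong refl) (simp add: eqS)
  finally show ?thesis by (simp add: fredholm_det_def SS_def MM_def)
qed

lemma infsum_int_eq_nat:
  fixes f :: "int \<Rightarrow> complex"
  assumes "\<And>t. t < 0 \<Longrightarrow> f t = 0"
  shows "infsum f UNIV = infsum (\<lambda>n. f (int n)) UNIV"
proof -
  have "infsum f UNIV = infsum f (range int)"
  proof (rule infsum_cong_neutral)
    fix x assume "x \<in> UNIV - range int"
    then have "x < 0" by (metis DiffE nat_0_le not_le rangeI)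
    then show "f x = 0" by (rule assms)
  qed auto
  also have "\<dots> = infsum (f \<circ> int) UNIV" by (rule infsum_reindex) (simp add: inj_on_def)
  finally show ?thesis by (simp add: o_def)
qed

lemma mpow_zext: "mpow (zext C) k (int r) (int s) = mpow C k r s"
proof (induction k arbitrary: r s)
  case 0 then show ?case by (simp add: idm_def)
next
  case (Suc k)
  have "mpow (zext C) (Suc k) (int r) (int s) = (\<Sum>\<^sub>\<infinity>t. zext C (int r) t * mpow (zext C) k t (int s))"
    by (simp add: mmult_def)
  also have "\<dots> = (\<Sum>\<^sub>\<infinity>n. zext C (int r) (int n) * mpow (zext C) k (int n) (int s))"
    by (rule infsum_int_eq_nat) (simp add: zext_def)
  also have "\<dots> = mpow C (Suc k) r s" unfolding Suc.IH by (simp add: mmult_def zext_def)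
  finally show ?case .
qed

lemma mscale_zext: "mscale z (zext B) = zext (mscale z B)"
  by (auto simp: fun_eq_iff mscale_def zext_def)

lemma mexp_zext: "mexp (mscale z (zext B)) (int r) (int s) = mexp (mscale z B) r s"
  by (simp add: mexp_def mscale_zext mpow_zext)

lemma bij_int_interval: "bij_betw int {0..<n} {0..<int n}"
  by (rule bij_betwI[of _ _ _ nat]) auto

lemma finite_section_eq_det_on:
  fixes B :: "nat mat"
  shows "exp (- z * mtrace (mmult B (Pn n))) * fredholm_det (mmult (msub (mexp (mscale z B)) idm) (Pn n))
       = exp (- z * (\<Sum>r\<in>{0..<int n}. zext B r r))
         * det_on {0..<int n} (\<lambda>r s. idm r s + (mexp (mscale z (zext B)) r s - idm r s))"
proof -
  have diagP: "\<And>t s. t \<noteq> s \<Longrightarrow> Pn n t s = 0" by (simp add: Pn_def)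
  have K: "mmult (msub (mexp (mscale z B)) idm) (Pn n) r s = (if s < n then mexp (mscale z B) r s - idm r s else 0)" for r s
    using mmult_diagonal_right[OF diagP, where K = "msub (mexp (mscale z B)) idm" and r = r and s = s] by (simp add: Pn_def msub_def)
  have "fredholm_det (mmult (msub (mexp (mscale z B)) idm) (Pn n))
        = det_on {0..<n} (\<lambda>r s. idm r s + mmult (msub (mexp (mscale z B)) idm) (Pn n) r s)"
    by (rule fredholm_det_eq_det_on) (auto simp: K split: if_splits)
  also have "\<dots> = det_on {0..<n} (\<lambda>r s. idm r s + (mexp (mscale z B) r s - idm r s))"
    by (rule det_on_cong) (auto simp: K)
  also have "\<dots> = det_on {0..<int n} (\<lambda>r s. idm r s + (mexp (mscale z (zext B)) r s - idm r s))"
    by (rule det_on_reindex[OF _ bij_int_interval, symmetric]) (auto simp: mexp_zext idm_def)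
  finally have F: "fredholm_det (mmult (msub (mexp (mscale z B)) idm) (Pn n)) = \<dots>" .
  have "mtrace (mmult B (Pn n)) = (\<Sum>\<^sub>\<infinity>r. if r < n then B r r else 0)"
    using mmult_diagonal_right[OF diagP, where K = B] by (simp add: mtrace_def Pn_def) (intro infsum_cong, simp)
  also have "\<dots> = (\<Sum>\<^sub>\<infinity>r\<in>{0..<n}. B r r)"
    by (rule infsum_cong_neutral) auto
  also have "\<dots> = (\<Sum>r\<in>{0..<n}. zext B (int r) (int r))" by (simp add: zext_def)
  also have "\<dots> = (\<Sum>r\<in>{0..<int n}. zext B r r)"
    by (rule sum.reindex_bij_betw[OF bij_int_interval])
  finally show ?thesis using F by simp
qed

lemma half_line_section_eq_det_on:
  fixes A :: "int mat"
  assumes lw: "vanishes_below (- int M) A" and band: "banded w A" and rs: "row_sum_le \<rho> A"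
  shows "exp (- z * mtrace (mmult A Pminus)) * fredholm_det (mmult (msub (mexp (mscale z A)) idm) Pminus)
       = exp (- z * (\<Sum>r\<in>{- int M..<0}. A r r))
         * det_on {- int M..<0} (\<lambda>r s. idm r s + (mexp (mscale z A) r s - idm r s))"
proof -
  have diagP: "\<And>t s. t \<noteq> s \<Longrightarrow> Pminus t s = 0" by (simp add: Pminus_def)
  have K: "mmult (msub (mexp (mscale z A)) idm) Pminus r s = (if s < 0 then mexp (mscale z A) r s - idm r s else 0)" for r s
    using mmult_diagonal_right[OF diagP, where K = "msub (mexp (mscale z A)) idm" and r = r and s = s] by (simp add: Pminus_def msub_def)
  have col0: "mexp (mscale z A) r s - idm r s = 0" if "s < - int M" for r s
  proof -
    have "(\<lambda>a. exp_coeff z a * mpow A (Suc a) r s) sums (mexp (mscale z A) r s - idm r s)"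
      by (rule mexp_minus_idm_sums[OF band rs])
    moreover have "(\<lambda>a. exp_coeff z a * mpow A (Suc a) r s) = (\<lambda>a. 0)"
      using vanishes_below_mpow_Suc[OF lw] that by (auto simp: fun_eq_iff vanishes_below_def)
    ultimately show ?thesis using sums_unique2[OF sums_zero, of "mexp (mscale z A) r s - idm r s"] by simp
  qed
  have "fredholm_det (mmult (msub (mexp (mscale z A)) idm) Pminus)
        = det_on {- int M..<0} (\<lambda>r s. idm r s + mmult (msub (mexp (mscale z A)) idm) Pminus r s)"
  proof (rule fredholm_det_eq_det_on)
    fix r s assume "mmult (msub (mexp (mscale z A)) idm) Pminus r s \<noteq> 0"
    then have "s < 0" "mexp (mscale z A) r s - idm r s \<noteq> 0" by (auto simp: K split: if_splits)
    then show "s \<in> {- int M..<0}" using col0 by force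
  qed simp
  also have "\<dots> = det_on {- int M..<0} (\<lambda>r s. idm r s + (mexp (mscale z A) r s - idm r s))"
    by (rule det_on_cong) (auto simp: K)
  finally have F: "fredholm_det (mmult (msub (mexp (mscale z A)) idm) Pminus) = \<dots>" .
  have "mtrace (mmult A Pminus) = (\<Sum>\<^sub>\<infinity>r. if r < 0 then A r r else 0)"
    using mmult_diagonal_right[OF diagP, where K = A] by (simp add: mtrace_def Pminus_def) (intro infsum_cong, simp)
  also have "\<dots> = (\<Sum>\<^sub>\<infinity>r\<in>{- int M..<0}. A r r)"
    by (rule infsum_cong_neutral) (use lw in \<open>auto simp: vanishes_below_def\<close>)
  also have "\<dots> = (\<Sum>r\<in>{- int M..<0}. A r r)" by simp
  finally show ?thesis using F by simp
qed

lemma bounded_l2_entries_bounded: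
  fixes B :: "nat mat"
  assumes "bounded_l2 B"
  shows "\<exists>C. \<forall>r s. norm (B r s) \<le> C"
proof -
  obtain C where C: "\<And>x :: nat \<Rightarrow> complex. (\<lambda>s. (norm (x s))\<^sup>2) summable_on UNIV \<longrightarrow>
       (\<forall>r. (\<lambda>s. B r s * x s) summable_on UNIV) \<and>
       (\<lambda>r. (norm (\<Sum>\<^sub>\<infinity>s. B r s * x s))\<^sup>2) summable_on UNIV \<and>
       (\<Sum>\<^sub>\<infinity>r. (norm (\<Sum>\<^sub>\<infinity>s. B r s * x s))\<^sup>2) \<le> C\<^sup>2 * (\<Sum>\<^sub>\<infinity>s. (norm (x s))\<^sup>2)"
    using assms unfolding bounded_l2_def by blast
  have "norm (B r0 s0) \<le> \<bar>C\<bar>" for r0 s0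
  proof -
    define x :: "nat \<Rightarrow> complex" where "x = (\<lambda>s. if s = s0 then 1 else 0)"
    have xs: "(\<Sum>\<^sub>\<infinity>s. B r s * x s) = B r s0" for r
    proof -
      have "(\<Sum>\<^sub>\<infinity>s. B r s * x s) = (\<Sum>\<^sub>\<infinity>s\<in>{s0}. B r s * x s)"
        by (rule infsum_cong_neutral) (auto simp: x_def)
      then show ?thesis by (simp add: x_def)
    qed
    have nx: "(\<lambda>s. (norm (x s))\<^sup>2) = (\<lambda>s. if s = s0 then 1 else 0)" by (auto simp: x_def fun_eq_iff)
    have nxs: "(\<lambda>s. (norm (x s))\<^sup>2) summable_on UNIV"
      unfolding nx by (rule summable_on_cong_neutral[where T = "{s0}", THEN iffD2]) auto
    have nxi: "(\<Sum>\<^sub>\<infinity>s. (norm (x s))\<^sup>2) = 1"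
    proof -
      have "(\<Sum>\<^sub>\<infinity>s. (norm (x s))\<^sup>2) = (\<Sum>\<^sub>\<infinity>s\<in>{s0}. (norm (x s))\<^sup>2)"
        by (rule infsum_cong_neutral) (auto simp: x_def)
      then show ?thesis by (simp add: x_def)
    qed
    from C[of x] nxs have s: "(\<lambda>r. (norm (B r s0))\<^sup>2) summable_on UNIV"
      and le: "(\<Sum>\<^sub>\<infinity>r. (norm (B r s0))\<^sup>2) \<le> C\<^sup>2" by (auto simp: xs nxi)
    have "(norm (B r0 s0))\<^sup>2 = (\<Sum>\<^sub>\<infinity>r\<in>{r0}. (norm (B r s0))\<^sup>2)" by simp
    also have "\<dots> \<le> (\<Sum>\<^sub>\<infinity>r. (norm (B r s0))\<^sup>2)"
      by (rule infsum_mono_neutral) (use s in auto)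
    also have "\<dots> \<le> C\<^sup>2" by (rule le)
    finally have "(norm (B r0 s0))\<^sup>2 \<le> \<bar>C\<bar>\<^sup>2" by simp
    then show ?thesis by (rule power2_le_imp_le) simp
  qed
  then show ?thesis by blast
qed

lemma finite_section_eq_exp_cut_log:
  fixes B :: "nat mat"
  assumes "banded w (zext B)" "row_sum_le \<rho> (zext B)" "exp (norm z * \<rho>) - 1 < 1"
  shows "exp (- z * mtrace (mmult B (Pn n))) * fredholm_det (mmult (msub (mexp (mscale z B)) idm) (Pn n))
       = exp (cut_log w (shift (int n) (zext B)) 0 z)"
proof -
  have "vanishes_below 0 (zext B)" by (auto simp: vanishes_below_def zext_def)
  from exp_cut_log[OF assms(1,2) this assms(3), of "int n"] show ?thesis
    unfolding finite_section_eq_det_on cut_log_shift[of w "zext B" "int n"] by simp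
qed

lemma half_line_section_eq_exp_cut_log:
  fixes A :: "int mat"
  assumes "banded w A" "row_sum_le \<rho> A" "vanishes_below (- int M) A" "exp (norm z * \<rho>) - 1 < 1"
  shows "exp (- z * mtrace (mmult A Pminus)) * fredholm_det (mmult (msub (mexp (mscale z A)) idm) Pminus)
       = exp (cut_log w A 0 z)"
  using half_line_section_eq_det_on[OF assms(3,1,2)] exp_cut_log[OF assms(1,2,3,4), of 0] by simp

lemma exp_cut_log_uniform_limit:
  fixes As :: "nat \<Rightarrow> int mat"
  assumes band: "\<And>x. banded w (As x)" and rs: "\<And>x. row_sum_le \<rho> (As x)"
    and lim: "\<And>r s. ((\<lambda>x. As x r s) \<longlongrightarrow> A r s) sequentially"
    and \<delta>: "0 \<le> \<delta>" and small: "exp (2 * \<rho> * \<delta>) - 1 < 1"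
  shows "uniform_limit (cball 0 \<delta>) (\<lambda>x z. exp (cut_log w (As x) c z)) (\<lambda>z. exp (cut_log w A c z)) sequentially"
proof -
  define R where "R = (\<Sum>\<^sub>\<infinity>as. 2 * real w * majorant \<rho> \<delta> as)"
  have in_ball: "cut_log w A' c ` cball 0 \<delta> \<subseteq> cball 0 R" if "banded w A'" "row_sum_le \<rho> A'" for A'
    using norm_cut_log_le[OF that _ \<delta> small] by (auto simp: R_def)
  have "uniformly_continuous_on (cball 0 R) (exp :: complex \<Rightarrow> complex)"
    by (rule compact_uniformly_continuous) (auto intro!: continuous_intros)
  then have "uniform_limit (cball 0 \<delta>) (\<lambda>x z. exp (cut_log w (As x) c z)) (exp \<circ> cut_log w A c) sequentially"
    by (rule uniform_limit_compose[OF cut_log_uniform_limit[OF band rs lim \<delta> small]])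
       (use in_ball[OF band rs] in_ball[OF banded_limit[OF band lim] row_sum_le_limit[OF rs lim]] in auto)
  then show ?thesis by (simp only: comp_def)
qed

lemma small_radius_exists:
  fixes \<rho> :: real
  assumes "0 \<le> \<rho>"
  obtains \<delta> where "0 < \<delta>" "exp (2 * \<rho> * \<delta>) - 1 < 1"
proof
  show "0 < 1 / (8 * (\<rho> + 1))" using assms by simp
  have "2 * \<rho> * (1 / (8 * (\<rho> + 1))) < 1 / 2" using assms by (simp add: field_simps)
  then have "exp (2 * \<rho> * (1 / (8 * (\<rho> + 1)))) < exp (1 / 2)" by simp
  also have "\<dots> \<le> 2" by (rule exp_half_le2)
  finally show "exp (2 * \<rho> * (1 / (8 * (\<rho> + 1)))) - 1 < 1" by simp
qed

lemma exp_norm_mult_small: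
  assumes "norm z \<le> \<delta>" "0 \<le> \<rho>" "exp (2 * \<rho> * \<delta>) - 1 < 1"
  shows "exp (norm z * \<rho>) - 1 < 1"
proof -
  have "norm z * \<rho> \<le> \<delta> * \<rho>" by (rule mult_right_mono[OF assms(1,2)])
  also have "\<dots> \<le> 2 * \<rho> * \<delta>"
    using mult_nonneg_nonneg[OF order_trans[OF norm_ge_zero assms(1)] assms(2)] by simp
  finally have "exp (norm z * \<rho>) \<le> exp (2 * \<rho> * \<delta>)" by simp
  then show ?thesis using assms(3) by linarith
qed

lemma zext_banded_row_sum_le:
  assumes "banded_nat B" "bounded_l2 B"
  obtains w \<rho> where "banded w (zext B)" "row_sum_le \<rho> (zext B)"
proof -
  obtain w where w: "\<And>r s. \<bar>int r - int s\<bar> > int w \<Longrightarrow> B r s = 0"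
    using assms(1) unfolding banded_nat_def by blast
  have band: "banded w (zext B)"
    unfolding banded_def zext_def
  proof (intro allI impI)
    fix r s :: int assume rs: "int w < \<bar>r - s\<bar>"
    show "(if 0 \<le> r \<and> 0 \<le> s then B (nat r) (nat s) else 0) = 0"
    proof (cases "0 \<le> r \<and> 0 \<le> s")
      case True
      then have "\<bar>int (nat r) - int (nat s)\<bar> > int w" using rs by simp
      then show ?thesis using w True by simp
    qed auto
  qed
  obtain \<beta> where \<beta>: "\<And>r s. norm (B r s) \<le> \<beta>" using bounded_l2_entries_bounded[OF assms(2)] by blast
  have "0 \<le> \<beta>" using \<beta>[of 0 0] norm_ge_zero order_trans by blast
  then have "entries_le \<beta> (zext B)" using \<beta> by (auto simp: entries_le_def zext_def)
  with band show ?thesis by (intro that[OF band] row_sum_le_banded) auto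
qed

lemma banded_shift: "banded w A \<Longrightarrow> banded w (shift c A)"
  by (auto simp: banded_def shift_def)

lemma row_sum_le_shift:
  assumes "row_sum_le \<rho> A"
  shows "row_sum_le \<rho> (shift c A)"
  unfolding row_sum_le_def
proof (intro allI impI)
  fix r and F :: "int set" assume "finite F"
  have "(\<Sum>s\<in>F. norm (shift c A r s)) = (\<Sum>s\<in>(\<lambda>s. c + s) ` F. norm (A (c + r) s))"
    by (simp add: sum.reindex shift_def)
  also have "\<dots> \<le> \<rho>" using assms \<open>finite F\<close> by (simp add: row_sum_le_def)
  finally show "(\<Sum>s\<in>F. norm (shift c A r s)) \<le> \<rho>" .
qed

lemma banded_trunc: "banded w A \<Longrightarrow> banded w (trunc M A)"
  by (auto simp: banded_def trunc_def)

lemma row_sum_le_trunc: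
  assumes "row_sum_le \<rho> A"
  shows "row_sum_le \<rho> (trunc M A)"
  unfolding row_sum_le_def
proof (intro allI impI)
  fix r and F :: "int set" assume F: "finite F"
  have "(\<Sum>s\<in>F. norm (trunc M A r s)) \<le> (\<Sum>s\<in>F. norm (A r s))"
    by (intro sum_mono) (simp add: trunc_def)
  also have "\<dots> \<le> \<rho>" using assms F by (simp add: row_sum_le_def)
  finally show "(\<Sum>s\<in>F. norm (trunc M A r s)) \<le> \<rho>" .
qed

lemma vanishes_below_trunc: "vanishes_below (- int M) (trunc M A)"
  by (auto simp: vanishes_below_def trunc_def)

lemma trunc_tendsto: "((\<lambda>M. trunc M A r s) \<longlongrightarrow> A r s) sequentially"
proof (rule tendsto_eventually)
  show "\<forall>\<^sub>F M in sequentially. trunc M A r s = A r s"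
    unfolding eventually_sequentially
    by (rule exI[of _ "nat \<bar>r\<bar> + nat \<bar>s\<bar>"]) (auto simp: trunc_def)
qed

lemma finite_sections_uniform_limit:
  fixes B :: "nat mat" and n :: "nat \<Rightarrow> nat"
  assumes band: "banded w (zext B)" and rs: "row_sum_le \<rho> (zext B)"
    and lim: "\<And>r s. ((\<lambda>j. zext B (int (n j) + r) (int (n j) + s)) \<longlongrightarrow> A r s) sequentially"
    and \<delta>: "0 \<le> \<delta>" and small: "exp (2 * \<rho> * \<delta>) - 1 < 1"
  shows "uniform_limit (ball 0 \<delta>)
    (\<lambda>j z. exp (- z * mtrace (mmult B (Pn (n j)))) * fredholm_det (mmult (msub (mexp (mscale z B)) idm) (Pn (n j))))
    (\<lambda>z. exp (cut_log w A 0 z)) sequentially"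
proof -
  have "uniform_limit (ball 0 \<delta>) (\<lambda>j z. exp (cut_log w (shift (int (n j)) (zext B)) 0 z))
      (\<lambda>z. exp (cut_log w A 0 z)) sequentially"
    by (rule uniform_limit_on_subset[OF exp_cut_log_uniform_limit[OF banded_shift[OF band]
          row_sum_le_shift[OF rs] _ \<delta> small]]) (use lim in \<open>auto simp: shift_def\<close>)
  moreover have zs: "exp (norm z * \<rho>) - 1 < 1" if "z \<in> ball 0 \<delta>" for z
    using that by (intro exp_norm_mult_small[OF _ row_sum_le_nonneg[OF rs] small]) simp
  ultimately show ?thesis
    by (subst uniform_limit_cong'[OF finite_section_eq_exp_cut_log[OF band rs zs]]) auto
qed

lemma half_line_sections_uniform_limit:
  assumes band: "banded w A" and rs: "row_sum_le \<rho> A"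
    and \<delta>: "0 \<le> \<delta>" and small: "exp (2 * \<rho> * \<delta>) - 1 < 1"
  shows "uniform_limit (ball 0 \<delta>)
    (\<lambda>M z. exp (- z * mtrace (mmult (trunc M A) Pminus)) *
      fredholm_det (mmult (msub (mexp (mscale z (trunc M A))) idm) Pminus))
    (\<lambda>z. exp (cut_log w A 0 z)) sequentially"
proof -
  have "uniform_limit (ball 0 \<delta>) (\<lambda>M z. exp (cut_log w (trunc M A) 0 z)) (\<lambda>z. exp (cut_log w A 0 z)) sequentially"
    by (rule uniform_limit_on_subset[OF exp_cut_log_uniform_limit[OF banded_trunc[OF band]
          row_sum_le_trunc[OF rs] trunc_tendsto \<delta> small]]) auto
  moreover have zs: "exp (norm z * \<rho>) - 1 < 1" if "z \<in> ball 0 \<delta>" for z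
    using that by (intro exp_norm_mult_small[OF _ row_sum_le_nonneg[OF rs] small]) simp
  ultimately show ?thesis
    by (subst uniform_limit_cong'[OF half_line_section_eq_exp_cut_log[OF banded_trunc[OF band]
          row_sum_le_trunc[OF rs] vanishes_below_trunc zs]]) auto
qed

theorem theorem4p7:
  fixes B :: "nat mat" and BR :: "int mat" and n :: "nat \<Rightarrow> nat"
  assumes "banded_nat B"
    and "bounded_l2 B"
    and "strict_mono n"
    and "right_limit B n BR"
  shows "\<exists>\<delta>>0. \<exists>F :: complex \<Rightarrow> complex.
     uniform_limit (ball 0 \<delta>)
       (\<lambda>j z. exp (- z * mtrace (mmult B (Pn (n j)))) *
              fredholm_det (mmult (msub (mexp (mscale z B)) idm) (Pn (n j))))
       F sequentially \<and>
     uniform_limit (ball 0 \<delta>)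
       (\<lambda>M z. exp (- z * mtrace (mmult (trunc M BR) Pminus)) *
              fredholm_det (mmult (msub (mexp (mscale z (trunc M BR))) idm) Pminus))
       F sequentially \<and>
     F analytic_on ball 0 \<delta>"
proof -
  obtain w \<rho> where band: "banded w (zext B)" and rs: "row_sum_le \<rho> (zext B)"
    using zext_banded_row_sum_le[OF assms(1,2)] .
  obtain \<delta> where \<delta>: "0 < \<delta>" and small: "exp (2 * \<rho> * \<delta>) - 1 < 1"
    using small_radius_exists[OF row_sum_le_nonneg[OF rs]] .
  have lim: "((\<lambda>j. shift (int (n j)) (zext B) r s) \<longlongrightarrow> BR r s) sequentially" for r s
    using assms(4) unfolding right_limit_def shift_def by blast
  have band_BR: "banded w BR" and rs_BR: "row_sum_le \<rho> BR"
    using banded_limit[OF banded_shift[OF band] lim] row_sum_le_limit[OF row_sum_le_shift[OF rs] lim] .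
  have "(\<lambda>z. exp (cut_log w BR 0 z)) analytic_on ball 0 \<delta>"
    unfolding analytic_on_open[OF open_ball] using \<delta>
    by (intro holomorphic_on_exp' cut_log_holomorphic[OF band_BR rs_BR _ small]) auto
  moreover note finite_sections_uniform_limit[OF band rs lim[unfolded shift_def] _ small]
    half_line_sections_uniform_limit[OF band_BR rs_BR _ small]
  ultimately show ?thesis using \<delta> by (intro exI[of _ \<delta>]) auto
qed

end
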